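(* Let $\mathcal A$, $\mathcal A_1$, $\mathcal A_2$, $\Pi_1,\Pi_2$ be as in the context, and let $\mathcal B$ be a bialgebra with a nondegenerate pairing $\langle\cdot,\cdot\rangle:\mathcal A\otimes\mathcal B\to\mathbb C$ satisfying $\langle a,b_1b_2\rangle=\langle\Delta(a),b_1\otimes b_2\rangle$ and $\langle a_1a_2,b\rangle=\langle a_2\otimes a_1,\Delta(b)\rangle$. Let $\mathcal R=\sum_\alpha a^\alpha\otimes b_\alpha$ be the canonical tensor of the pairing ($\{a^\alpha\},\{b_\alpha\}$ dual bases). Put $\mathcal R_i=(\Pi_i\otimes\mathrm{id})\mathcal R$, $i=1,2$. Then $\mathcal R=\mathcal R_1\cdot\mathcal R_2$ (product in $\mathcal A\hat\otimes\mathcal B$).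
   Context: $\mathcal A$ is a bialgebra with unit, comultiplication $\Delta$ and counit $\varepsilon$; $\mathcal A_1,\mathcal A_2\subset\mathcal A$ are subalgebras such that multiplication $\mathcal A_1\otimes\mathcal A_2\to\mathcal A$ is a linear isomorphism, $\Delta(\mathcal A_1)\subset\mathcal A\otimes\mathcal A_1$, $\Delta(\mathcal A_2)\subset\mathcal A_2\otimes\mathcal A$; $\Pi_1(a_1a_2)=a_1\varepsilon(a_2)$, $\Pi_2(a_1a_2)=\varepsilon(a_1)a_2$ ($a_i\in\mathcal A_i$). To make dual bases meaningful assume $\mathcal A,\mathcal B$ are graded with finite-dimensional homogeneous components, the pairing is nondegenerate between corresponding components, and tensors are taken in the completed tensor product $\mathcal A\hat\otimes\mathcal B$. Dual bases means $\sum_\alpha\langle a^\alpha,b\rangle b_\alpha=b$ for all $b\in\mathcal B$ and $\sum_\alpha a^\alpha\langle a,b_\alpha\rangle=a$ for all $a\in\mathcal A$. *)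

theory Defs
  imports Complex_Main
begin

text \<open>
A complex vector space with a (homogeneous) basis indexed by a type 'i is
represented by the finitely supported coefficient functions 'i => complex. The tensor product
of spaces with bases indexed by 'i and 'j is the space with basis indexed by 'i * 'j.
Linear maps are given by structure constants on basis vectors.
\<close>

definition fsupp :: "('i \<Rightarrow> complex) \<Rightarrow> bool" where
  "fsupp x \<longleftrightarrow> finite {i. x i \<noteq> 0}"

definition delta :: "'i \<Rightarrow> 'i \<Rightarrow> complex" where
  "delta k = (\<lambda>i. if i = k then 1 else 0)"

definition tensor :: "('i \<Rightarrow> complex) \<Rightarrow> ('j \<Rightarrow> complex) \<Rightarrow> ('i \<times> 'j \<Rightarrow> complex)" where
  "tensor x y = (\<lambda>(i, j). x i * y j)"

text \<open>Multiplication with structure constants m: e_k e_l = sum_i m k l i e_i.\<close>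
definition mulc :: "('i \<Rightarrow> 'i \<Rightarrow> 'i \<Rightarrow> complex) \<Rightarrow> ('i \<Rightarrow> complex) \<Rightarrow> ('i \<Rightarrow> complex) \<Rightarrow> ('i \<Rightarrow> complex)" where
  "mulc m x y = (\<lambda>i. \<Sum>k\<in>{k. x k \<noteq> 0}. \<Sum>l\<in>{l. y l \<noteq> 0}. x k * y l * m k l i)"

definition mult_map :: "('i \<Rightarrow> 'i \<Rightarrow> 'i \<Rightarrow> complex) \<Rightarrow> ('i \<times> 'i \<Rightarrow> complex) \<Rightarrow> ('i \<Rightarrow> complex)" where
  "mult_map m t = (\<lambda>i. \<Sum>p\<in>{p. t p \<noteq> 0}. t p * m (fst p) (snd p) i)"

text \<open>Product in A (x) A: (x (x) y)(x' (x) y') = x x' (x) y y'.\<close>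
definition mul2 :: "('i \<Rightarrow> 'i \<Rightarrow> 'i \<Rightarrow> complex) \<Rightarrow> ('i \<times> 'i \<Rightarrow> complex) \<Rightarrow> ('i \<times> 'i \<Rightarrow> complex) \<Rightarrow> ('i \<times> 'i \<Rightarrow> complex)" where
  "mul2 m t s = (\<lambda>(i, j). \<Sum>p\<in>{p. t p \<noteq> 0}. \<Sum>q\<in>{q. s q \<noteq> 0}.
       t p * s q * m (fst p) (fst q) i * m (snd p) (snd q) j)"

text \<open>Coproduct with structure constants d: Delta(e_i) = sum_{k,l} d i k l e_k (x) e_l.\<close>
definition comulc :: "('i \<Rightarrow> 'i \<Rightarrow> 'i \<Rightarrow> complex) \<Rightarrow> ('i \<Rightarrow> complex) \<Rightarrow> ('i \<times> 'i \<Rightarrow> complex)" where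
  "comulc d x = (\<lambda>(k, l). \<Sum>i\<in>{i. x i \<noteq> 0}. x i * d i k l)"

definition counitc :: "('i \<Rightarrow> complex) \<Rightarrow> ('i \<Rightarrow> complex) \<Rightarrow> complex" where
  "counitc e x = (\<Sum>i\<in>{i. x i \<noteq> 0}. x i * e i)"

definition id_eps :: "('i \<Rightarrow> complex) \<Rightarrow> ('i \<times> 'i \<Rightarrow> complex) \<Rightarrow> ('i \<Rightarrow> complex)" where
  "id_eps e t = (\<lambda>i. \<Sum>l\<in>{l. t (i, l) \<noteq> 0}. t (i, l) * e l)"

definition eps_id :: "('i \<Rightarrow> complex) \<Rightarrow> ('i \<times> 'i \<Rightarrow> complex) \<Rightarrow> ('i \<Rightarrow> complex)" where
  "eps_id e t = (\<lambda>l. \<Sum>i\<in>{i. t (i, l) \<noteq> 0}. e i * t (i, l))"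

definition comul_id :: "('i \<Rightarrow> 'i \<Rightarrow> 'i \<Rightarrow> complex) \<Rightarrow> ('i \<times> 'i \<Rightarrow> complex) \<Rightarrow> ('i \<times> 'i \<times> 'i \<Rightarrow> complex)" where
  "comul_id d t = (\<lambda>(a, b, c). \<Sum>k\<in>{k. t (k, c) \<noteq> 0}. t (k, c) * d k a b)"

definition id_comul :: "('i \<Rightarrow> 'i \<Rightarrow> 'i \<Rightarrow> complex) \<Rightarrow> ('i \<times> 'i \<Rightarrow> complex) \<Rightarrow> ('i \<times> 'i \<times> 'i \<Rightarrow> complex)" where
  "id_comul d t = (\<lambda>(a, b, c). \<Sum>k\<in>{k. t (a, k) \<noteq> 0}. t (a, k) * d k b c)"

text \<open>A graded bialgebra (over the complex numbers) with finite-dimensional homogeneous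
components, given by a homogeneous basis indexed by 'i with degree function deg, and
structure constants m (product), u (unit), d (coproduct), e (counit).\<close>
definition graded_bialgebra ::
  "('i \<Rightarrow> nat) \<Rightarrow> ('i \<Rightarrow> 'i \<Rightarrow> 'i \<Rightarrow> complex) \<Rightarrow> ('i \<Rightarrow> complex) \<Rightarrow>
   ('i \<Rightarrow> 'i \<Rightarrow> 'i \<Rightarrow> complex) \<Rightarrow> ('i \<Rightarrow> complex) \<Rightarrow> bool" where
  "graded_bialgebra deg m u d e \<longleftrightarrow>
     (\<forall>n. finite {i. deg i = n}) \<and>
     (\<forall>k l i. m k l i \<noteq> 0 \<longrightarrow> deg i = deg k + deg l) \<and>
     (\<forall>i. u i \<noteq> 0 \<longrightarrow> deg i = 0) \<and>
     (\<forall>i k l. d i k l \<noteq> 0 \<longrightarrow> deg i = deg k + deg l) \<and>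
     (\<forall>i. e i \<noteq> 0 \<longrightarrow> deg i = 0) \<and>
     (\<forall>x y z. fsupp x \<longrightarrow> fsupp y \<longrightarrow> fsupp z \<longrightarrow>
        mulc m (mulc m x y) z = mulc m x (mulc m y z)) \<and>
     (\<forall>x. fsupp x \<longrightarrow> mulc m u x = x \<and> mulc m x u = x) \<and>
     (\<forall>x. fsupp x \<longrightarrow> comul_id d (comulc d x) = id_comul d (comulc d x)) \<and>
     (\<forall>x. fsupp x \<longrightarrow> id_eps e (comulc d x) = x \<and> eps_id e (comulc d x) = x) \<and>
     (\<forall>x y. fsupp x \<longrightarrow> fsupp y \<longrightarrow>
        comulc d (mulc m x y) = mul2 m (comulc d x) (comulc d y)) \<and>
     comulc d u = tensor u u \<and>
     (\<forall>x y. fsupp x \<longrightarrow> fsupp y \<longrightarrow>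
        counitc e (mulc m x y) = counitc e x * counitc e y) \<and>
     counitc e u = 1"

definition homog :: "('i \<Rightarrow> nat) \<Rightarrow> nat \<Rightarrow> ('i \<Rightarrow> complex) \<Rightarrow> bool" where
  "homog deg n x \<longleftrightarrow> (\<forall>i. x i \<noteq> 0 \<longrightarrow> deg i = n)"

definition pairing :: "('i \<Rightarrow> 'j \<Rightarrow> complex) \<Rightarrow> ('i \<Rightarrow> complex) \<Rightarrow> ('j \<Rightarrow> complex) \<Rightarrow> complex" where
  "pairing pr x y = (\<Sum>i\<in>{i. x i \<noteq> 0}. \<Sum>j\<in>{j. y j \<noteq> 0}. x i * y j * pr i j)"

definition pairing2 :: "('i \<Rightarrow> 'j \<Rightarrow> complex) \<Rightarrow> ('i \<times> 'i \<Rightarrow> complex) \<Rightarrow> ('j \<times> 'j \<Rightarrow> complex) \<Rightarrow> complex" where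
  "pairing2 pr t s = (\<Sum>p\<in>{p. t p \<noteq> 0}. \<Sum>q\<in>{q. s q \<noteq> 0}.
       t p * s q * pr (fst p) (fst q) * pr (snd p) (snd q))"

definition graded_nondeg_pairing :: "('i \<Rightarrow> nat) \<Rightarrow> ('j \<Rightarrow> nat) \<Rightarrow> ('i \<Rightarrow> 'j \<Rightarrow> complex) \<Rightarrow> bool" where
  "graded_nondeg_pairing degA degB pr \<longleftrightarrow>
     (\<forall>i j. pr i j \<noteq> 0 \<longrightarrow> degA i = degB j) \<and>
     (\<forall>n x. fsupp x \<longrightarrow> homog degA n x \<longrightarrow>
        (\<forall>y. fsupp y \<longrightarrow> homog degB n y \<longrightarrow> pairing pr x y = 0) \<longrightarrow> x = (\<lambda>_. 0)) \<and>
     (\<forall>n y. fsupp y \<longrightarrow> homog degB n y \<longrightarrow>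
        (\<forall>x. fsupp x \<longrightarrow> homog degA n x \<longrightarrow> pairing pr x y = 0) \<longrightarrow> y = (\<lambda>_. 0))"

definition csubspace :: "('i \<Rightarrow> complex) set \<Rightarrow> bool" where
  "csubspace S \<longleftrightarrow> S \<subseteq> {x. fsupp x} \<and> (\<lambda>_. 0) \<in> S \<and>
     (\<forall>x\<in>S. \<forall>y\<in>S. (\<lambda>i. x i + y i) \<in> S) \<and> (\<forall>c. \<forall>x\<in>S. (\<lambda>i. c * x i) \<in> S)"

definition subalgebra :: "('i \<Rightarrow> 'i \<Rightarrow> 'i \<Rightarrow> complex) \<Rightarrow> ('i \<Rightarrow> complex) \<Rightarrow> ('i \<Rightarrow> complex) set \<Rightarrow> bool" where
  "subalgebra m u S \<longleftrightarrow> csubspace S \<and> u \<in> S \<and> (\<forall>x\<in>S. \<forall>y\<in>S. mulc m x y \<in> S)"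

definition tspan :: "('i \<Rightarrow> complex) set \<Rightarrow> ('j \<Rightarrow> complex) set \<Rightarrow> ('i \<times> 'j \<Rightarrow> complex) set" where
  "tspan S T = {t. \<exists>(n::nat) x y. (\<forall>k<n. x k \<in> S \<and> y k \<in> T) \<and>
                        t = (\<lambda>p. \<Sum>k<n. tensor (x k) (y k) p)}"

text \<open>Pi_1 = (id (x) eps) o mu^{-1} and Pi_2 = (eps (x) id) o mu^{-1}, where
mu : A_1 (x) A_2 -> A is the multiplication isomorphism; so Pi_1(a1 a2) = a1 eps(a2) and
Pi_2(a1 a2) = eps(a1) a2.\<close>
definition Pi1 :: "('i \<Rightarrow> 'i \<Rightarrow> 'i \<Rightarrow> complex) \<Rightarrow> ('i \<Rightarrow> complex) \<Rightarrow> ('i \<Rightarrow> complex) set \<Rightarrow>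
    ('i \<Rightarrow> complex) set \<Rightarrow> ('i \<Rightarrow> complex) \<Rightarrow> ('i \<Rightarrow> complex)" where
  "Pi1 m e A1 A2 x = id_eps e (THE t. t \<in> tspan A1 A2 \<and> mult_map m t = x)"

definition Pi2 :: "('i \<Rightarrow> 'i \<Rightarrow> 'i \<Rightarrow> complex) \<Rightarrow> ('i \<Rightarrow> complex) \<Rightarrow> ('i \<Rightarrow> complex) set \<Rightarrow>
    ('i \<Rightarrow> complex) set \<Rightarrow> ('i \<Rightarrow> complex) \<Rightarrow> ('i \<Rightarrow> complex)" where
  "Pi2 m e A1 A2 x = eps_id e (THE t. t \<in> tspan A1 A2 \<and> mult_map m t = x)"

text \<open>Dual bases {a^alpha}, {b_alpha} (homogeneous, alpha of degree dk alpha,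
finitely many of each degree), in the sense:
sum_alpha <a^alpha, b> b_alpha = b and sum_alpha a^alpha <a, b_alpha> = a.\<close>
definition dual_bases :: "('i \<Rightarrow> nat) \<Rightarrow> ('j \<Rightarrow> nat) \<Rightarrow> ('i \<Rightarrow> 'j \<Rightarrow> complex) \<Rightarrow>
    ('k \<Rightarrow> nat) \<Rightarrow> ('k \<Rightarrow> 'i \<Rightarrow> complex) \<Rightarrow> ('k \<Rightarrow> 'j \<Rightarrow> complex) \<Rightarrow> bool" where
  "dual_bases degA degB pr dk a b \<longleftrightarrow>
     (\<forall>n. finite {\<alpha>. dk \<alpha> = n}) \<and>
     (\<forall>\<alpha>. fsupp (a \<alpha>) \<and> homog degA (dk \<alpha>) (a \<alpha>)) \<and>
     (\<forall>\<alpha>. fsupp (b \<alpha>) \<and> homog degB (dk \<alpha>) (b \<alpha>)) \<and>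
     (\<forall>y. fsupp y \<longrightarrow>
        (\<lambda>j. \<Sum>\<alpha>\<in>{\<alpha>. pairing pr (a \<alpha>) y \<noteq> 0}. pairing pr (a \<alpha>) y * b \<alpha> j) = y) \<and>
     (\<forall>x. fsupp x \<longrightarrow>
        (\<lambda>i. \<Sum>\<alpha>\<in>{\<alpha>. pairing pr x (b \<alpha>) \<noteq> 0}. a \<alpha> i * pairing pr x (b \<alpha>)) = x)"

text \<open>Completed tensor product: with homogeneous bases, the completed tensor product
prod_{m,n} A_m (x) B_n is the space of all functions 'i * 'j => complex.\<close>
definition canon :: "('k \<Rightarrow> 'i \<Rightarrow> complex) \<Rightarrow> ('k \<Rightarrow> 'j \<Rightarrow> complex) \<Rightarrow> ('i \<times> 'j \<Rightarrow> complex)" where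
  "canon a b = (\<lambda>(i, j). \<Sum>\<alpha>\<in>{\<alpha>. a \<alpha> i * b \<alpha> j \<noteq> 0}. a \<alpha> i * b \<alpha> j)"

text \<open>(f (x) id) applied to an element of the completed tensor product (f linear on A,
given by its values on basis vectors).\<close>
definition map_left :: "(('i \<Rightarrow> complex) \<Rightarrow> ('i \<Rightarrow> complex)) \<Rightarrow> ('i \<times> 'j \<Rightarrow> complex) \<Rightarrow> ('i \<times> 'j \<Rightarrow> complex)" where
  "map_left f X = (\<lambda>(i, j). \<Sum>k\<in>{k. X (k, j) \<noteq> 0}. f (delta k) i * X (k, j))"

text \<open>Product in the completed tensor product: (x (x) y)(x' (x) y') = x x' (x) y y'.
The sums are finite since the products of A and B are graded.\<close>
definition cmul :: "('i \<Rightarrow> 'i \<Rightarrow> 'i \<Rightarrow> complex) \<Rightarrow> ('j \<Rightarrow> 'j \<Rightarrow> 'j \<Rightarrow> complex) \<Rightarrow>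
    ('i \<times> 'j \<Rightarrow> complex) \<Rightarrow> ('i \<times> 'j \<Rightarrow> complex) \<Rightarrow> ('i \<times> 'j \<Rightarrow> complex)" where
  "cmul mA mB X Y = (\<lambda>(i, j).
     \<Sum>p\<in>{p. mA (fst p) (snd p) i \<noteq> 0}. \<Sum>q\<in>{q. mB (fst q) (snd q) j \<noteq> 0}.
       X (fst p, fst q) * Y (snd p, snd q) * mA (fst p) (snd p) i * mB (fst q) (snd q) j)"

end

theory Submission
  imports Defs "HOL-Library.Groups_Big_Fun"
begin

text \<open>
Let mult_proj = m o (Pi_1 (x) Pi_2) : A (x) A -> A. Expanding
b_alpha b_beta = sum_gamma <a^gamma, b_alpha b_beta> b_gamma and using
<a^gamma, b_alpha b_beta> = <Delta a^gamma, b_alpha (x) b_beta>, the coefficient of b_gamma in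
R_1 R_2 becomes mult_proj (Delta a^gamma), because the dual bases reassemble the basis vectors
of A. So it suffices to show mult_proj o Delta = id, and by linearity and A = A_1 A_2 it is
enough to do so on products x_1 x_2 with x_i in A_i. Write Delta x_1 = sum u (x) v with v in A_1
and Delta x_2 = sum w (x) z with w in A_2, so that Delta (x_1 x_2) = sum u w (x) v z.
As Pi_1 (y w) = Pi_1 (y) eps(w) for w in A_2 and Pi_2 (v y) = eps(v) Pi_2 (y) for v in A_1,
the counit axioms give
mult_proj (Delta (x_1 x_2)) = Pi_1 (sum u eps(v)) Pi_2 (sum eps(w) z) = Pi_1 x_1 Pi_2 x_2 = x_1 x_2.
\<close>

section \<open>Finitely supported functions and linear combinations\<close>

lemma fsupp_delta [simp]: "fsupp (delta k)"
  by (simp add: fsupp_def delta_def)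

lemma support_tensor: "{p. tensor x y p \<noteq> 0} = {i. x i \<noteq> 0} \<times> {j. y j \<noteq> 0}"
  by (auto simp: tensor_def)

lemma fsupp_tensor: "fsupp x \<Longrightarrow> fsupp y \<Longrightarrow> fsupp (tensor x y)"
  by (simp add: fsupp_def support_tensor)

lemma fsupp_row: "fsupp t \<Longrightarrow> fsupp (\<lambda>l. t (i, l))"
  unfolding fsupp_def by (rule finite_subset[of _ "snd ` {p. t p \<noteq> 0}"]) force+

lemma fsupp_column: "fsupp t \<Longrightarrow> fsupp (\<lambda>k. t (k, l))"
  unfolding fsupp_def by (rule finite_subset[of _ "fst ` {p. t p \<noteq> 0}"]) force+

lemma fsupp_finite_mult: "fsupp x \<Longrightarrow> finite {k. c * (x k * h k) \<noteq> 0}"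
  unfolding fsupp_def by (rule finite_subset[rotated]) auto

lemma fsupp_sum:
  assumes "finite F" "\<And>f. f \<in> F \<Longrightarrow> fsupp (x f)"
  shows "fsupp (\<lambda>i. \<Sum>f\<in>F. x f i)"
  unfolding fsupp_def
proof (rule finite_subset)
  show "{i. (\<Sum>f\<in>F. x f i) \<noteq> 0} \<subseteq> (\<Union>f\<in>F. {i. x f i \<noteq> 0})"
    by (auto elim: sum.not_neutral_contains_not_neutral)
  show "finite (\<Union>f\<in>F. {i. x f i \<noteq> 0})"
    using assms by (simp add: fsupp_def)
qed

lemma sum_support_eq_Sum_any:
  fixes x h :: "'a \<Rightarrow> complex"
  assumes "fsupp x"
  shows "(\<Sum>k | x k \<noteq> 0. x k * h k) = Sum_any (\<lambda>k. x k * h k)"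
  by (rule Sum_any.expand_superset[symmetric]) (use assms in \<open>auto simp: fsupp_def\<close>)

lemma Sum_any_sum_swap:
  assumes "finite F" "\<And>f. f \<in> F \<Longrightarrow> finite {x. g f x \<noteq> 0}"
  shows "Sum_any (\<lambda>x. \<Sum>f\<in>F. g f x) = (\<Sum>f\<in>F. Sum_any (g f))"
proof -
  let ?U = "\<Union>f\<in>F. {x. g f x \<noteq> 0}"
  have U: "finite ?U" using assms by auto
  have "Sum_any (\<lambda>x. \<Sum>f\<in>F. g f x) = (\<Sum>x\<in>?U. \<Sum>f\<in>F. g f x)"
    by (rule Sum_any.expand_superset[OF U]) (auto elim: sum.not_neutral_contains_not_neutral)
  also have "\<dots> = (\<Sum>f\<in>F. \<Sum>x\<in>?U. g f x)"
    by (rule sum.swap)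
  also have "\<dots> = (\<Sum>f\<in>F. Sum_any (g f))"
    by (intro sum.cong refl Sum_any.expand_superset[OF U, symmetric]) blast
  finally show ?thesis .
qed

definition lincomb :: "'f set \<Rightarrow> ('f \<Rightarrow> complex) \<Rightarrow> ('f \<Rightarrow> 'x \<Rightarrow> complex) \<Rightarrow> 'x \<Rightarrow> complex" where
  "lincomb F c x = (\<lambda>i. \<Sum>f\<in>F. c f * x f i)"

lemma fsupp_lincomb:
  "finite F \<Longrightarrow> (\<And>f. f \<in> F \<Longrightarrow> fsupp (x f)) \<Longrightarrow> fsupp (lincomb F c x)"
  unfolding lincomb_def by (rule fsupp_sum) (auto simp: fsupp_def)

lemma lincomb_cong:
  "F = G \<Longrightarrow> (\<And>f. f \<in> G \<Longrightarrow> c f = c' f) \<Longrightarrow> (\<And>f. f \<in> G \<Longrightarrow> x f = x' f) \<Longrightarrow>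
     lincomb F c x = lincomb G c' x'"
  unfolding lincomb_def by (intro ext sum.cong) auto

lemma lincomb_eqI:
  "(\<And>f i. f \<in> F \<Longrightarrow> c f * x f i = c' f * x' f i) \<Longrightarrow> lincomb F c x = lincomb F c' x'"
  unfolding lincomb_def by (intro ext sum.cong) auto

lemma lincomb_lincomb:
  "lincomb R c (\<lambda>r. lincomb S d (g r)) =
     lincomb (R \<times> S) (\<lambda>p. c (fst p) * d (snd p)) (\<lambda>p. g (fst p) (snd p))"
  by (simp add: lincomb_def sum_distrib_left sum.cartesian_product split_def mult.assoc)

lemma lincomb_sum_coeffs:
  "lincomb F (\<lambda>f. \<Sum>s\<in>S. w s * c s f) x = lincomb S w (\<lambda>s. lincomb F (c s) x)"
  unfolding lincomb_def
  by (rule ext) (simp add: sum_distrib_left sum_distrib_right mult.assoc, rule sum.swap)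

lemma lincomb_delta:
  assumes "finite K" "{k. x k \<noteq> 0} \<subseteq> K"
  shows "lincomb K x delta = x"
proof
  fix i
  have "lincomb K x delta i = (\<Sum>k\<in>K. if k = i then x k else 0)"
    unfolding lincomb_def by (rule sum.cong) (auto simp: delta_def)
  also have "\<dots> = x i"
    using assms by auto
  finally show "lincomb K x delta i = x i" .
qed

lemma Sum_any_lincomb:
  assumes "finite F" "\<And>f. f \<in> F \<Longrightarrow> fsupp (x f)"
  shows "Sum_any (\<lambda>k. lincomb F c x k * K k) = (\<Sum>f\<in>F. c f * Sum_any (\<lambda>k. x f k * K k))"
proof -
  have fin: "finite {k. c f * (x f k * K k) \<noteq> 0}" if "f \<in> F" for f
    using assms(2)[OF that] by (rule fsupp_finite_mult)
  have "Sum_any (\<lambda>k. lincomb F c x k * K k) = Sum_any (\<lambda>k. \<Sum>f\<in>F. c f * (x f k * K k))"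
    by (simp add: lincomb_def sum_distrib_right mult.assoc)
  also have "\<dots> = (\<Sum>f\<in>F. Sum_any (\<lambda>k. c f * (x f k * K k)))"
    using assms(1) fin by (rule Sum_any_sum_swap)
  also have "\<dots> = (\<Sum>f\<in>F. c f * Sum_any (\<lambda>k. x f k * K k))"
    using assms(2) fsupp_finite_mult[of _ 1]
    by (intro sum.cong refl Sum_any_right_distrib[symmetric]) auto
  finally show ?thesis .
qed

lemma kernel_map_lincomb:
  assumes "finite F" "\<And>f. f \<in> F \<Longrightarrow> fsupp (x f)"
    and "\<And>y. fsupp y \<Longrightarrow> g y = (\<lambda>i. Sum_any (\<lambda>k. y k * K k i))"
  shows "g (lincomb F c x) = lincomb F c (\<lambda>f. g (x f))"
  using assms by (simp add: fsupp_lincomb Sum_any_lincomb) (simp add: lincomb_def)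

section \<open>Linearity of the structure maps\<close>

lemma sum_support2_eq_Sum_any:
  fixes x y :: "'a \<Rightarrow> complex"
  assumes "fsupp x" "fsupp y"
  shows "(\<Sum>k | x k \<noteq> 0. \<Sum>l | y l \<noteq> 0. x k * y l * h k l) =
           Sum_any (\<lambda>k. x k * Sum_any (\<lambda>l. y l * h k l))"
proof -
  have "(\<Sum>k | x k \<noteq> 0. \<Sum>l | y l \<noteq> 0. x k * y l * h k l) =
          (\<Sum>k | x k \<noteq> 0. x k * (\<Sum>l | y l \<noteq> 0. y l * h k l))"
    by (simp add: sum_distrib_left mult.assoc)
  then show ?thesis
    by (simp add: sum_support_eq_Sum_any assms)
qed

lemma mulc_Sum_any_left:
  "fsupp x \<Longrightarrow> fsupp y \<Longrightarrow> mulc m x y = (\<lambda>i. Sum_any (\<lambda>k. x k * Sum_any (\<lambda>l. y l * m k l i)))"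
  by (simp add: mulc_def sum_support2_eq_Sum_any)

lemma mulc_Sum_any_right:
  "fsupp x \<Longrightarrow> fsupp y \<Longrightarrow> mulc m x y = (\<lambda>i. Sum_any (\<lambda>l. y l * Sum_any (\<lambda>k. x k * m k l i)))"
  unfolding mulc_def
  by (subst sum.swap) (simp add: mult.commute[of "x _" "y _"] sum_support2_eq_Sum_any)

lemma mul2_Sum_any_left:
  "fsupp t \<Longrightarrow> fsupp s \<Longrightarrow> mul2 m t s = (\<lambda>ij. Sum_any (\<lambda>p. t p * Sum_any (\<lambda>q.
     s q * (m (fst p) (fst q) (fst ij) * m (snd p) (snd q) (snd ij)))))"
  by (simp add: mul2_def sum_support2_eq_Sum_any[symmetric] mult.assoc split_def)

lemma mul2_Sum_any_right:
  "fsupp t \<Longrightarrow> fsupp s \<Longrightarrow> mul2 m t s = (\<lambda>ij. Sum_any (\<lambda>q. s q * Sum_any (\<lambda>p.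
     t p * (m (fst p) (fst q) (fst ij) * m (snd p) (snd q) (snd ij)))))"
  unfolding mul2_def
  by (subst sum.swap) (simp add: mult.commute[of "t _" "s _"] sum_support2_eq_Sum_any[symmetric] mult.assoc split_def)

lemma comulc_Sum_any:
  "fsupp x \<Longrightarrow> comulc d x = (\<lambda>p. Sum_any (\<lambda>i. x i * d i (fst p) (snd p)))"
  by (simp add: comulc_def sum_support_eq_Sum_any split_def)

lemma mult_map_Sum_any:
  "fsupp t \<Longrightarrow> mult_map m t = (\<lambda>i. Sum_any (\<lambda>p. t p * m (fst p) (snd p) i))"
  by (simp add: mult_map_def sum_support_eq_Sum_any)

lemma id_eps_Sum_any:
  assumes "fsupp t"
  shows "id_eps e t = (\<lambda>i. Sum_any (\<lambda>p. t p * (if fst p = i then e (snd p) else 0)))"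
proof
  fix i
  let ?L = "{l. t (i, l) \<noteq> 0}"
  have "Sum_any (\<lambda>p. t p * (if fst p = i then e (snd p) else 0)) =
          (\<Sum>p\<in>{i} \<times> ?L. t p * (if fst p = i then e (snd p) else 0))"
    using fsupp_row[OF assms, of i]
    by (intro Sum_any.expand_superset) (auto simp: fsupp_def)
  also have "\<dots> = id_eps e t i"
    by (simp add: id_eps_def sum.cartesian_product')
  finally show "id_eps e t i = Sum_any (\<lambda>p. t p * (if fst p = i then e (snd p) else 0))" ..
qed

lemma eps_id_Sum_any:
  assumes "fsupp t"
  shows "eps_id e t = (\<lambda>l. Sum_any (\<lambda>p. t p * (if snd p = l then e (fst p) else 0)))"
proof
  fix l
  let ?K = "{k. t (k, l) \<noteq> 0}"
  have "Sum_any (\<lambda>p. t p * (if snd p = l then e (fst p) else 0)) =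
          (\<Sum>p\<in>?K \<times> {l}. t p * (if snd p = l then e (fst p) else 0))"
    using fsupp_column[OF assms, of l]
    by (intro Sum_any.expand_superset) (auto simp: fsupp_def)
  also have "\<dots> = eps_id e t l"
    by (simp add: eps_id_def sum.cartesian_product' mult.commute)
  finally show "eps_id e t l = Sum_any (\<lambda>p. t p * (if snd p = l then e (fst p) else 0))" ..
qed

lemma id_eps_fsupp: "fsupp t \<Longrightarrow> fsupp (id_eps e t)"
  unfolding fsupp_def id_eps_def
  by (rule finite_subset[of _ "fst ` {p. t p \<noteq> 0}"])
    (auto elim!: sum.not_neutral_contains_not_neutral intro: image_eqI[where x = "(_, _)"])

lemma eps_id_fsupp: "fsupp t \<Longrightarrow> fsupp (eps_id e t)"
  unfolding fsupp_def eps_id_def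
  by (rule finite_subset[of _ "snd ` {p. t p \<noteq> 0}"])
    (auto elim!: sum.not_neutral_contains_not_neutral intro: image_eqI[where x = "(_, _)"])

lemma mulc_lincomb_left:
  "fsupp y \<Longrightarrow> finite F \<Longrightarrow> (\<And>f. f \<in> F \<Longrightarrow> fsupp (x f)) \<Longrightarrow>
     mulc m (lincomb F c x) y = lincomb F c (\<lambda>f. mulc m (x f) y)"
  by (erule kernel_map_lincomb) (simp_all add: mulc_Sum_any_left)

lemma mulc_lincomb_right:
  "fsupp y \<Longrightarrow> finite F \<Longrightarrow> (\<And>f. f \<in> F \<Longrightarrow> fsupp (x f)) \<Longrightarrow>
     mulc m y (lincomb F c x) = lincomb F c (\<lambda>f. mulc m y (x f))"
  by (erule kernel_map_lincomb) (simp_all add: mulc_Sum_any_right)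

lemma mul2_lincomb_left:
  "fsupp s \<Longrightarrow> finite F \<Longrightarrow> (\<And>f. f \<in> F \<Longrightarrow> fsupp (t f)) \<Longrightarrow>
     mul2 m (lincomb F c t) s = lincomb F c (\<lambda>f. mul2 m (t f) s)"
  by (erule kernel_map_lincomb) (simp_all add: mul2_Sum_any_left)

lemma mul2_lincomb_right:
  "fsupp s \<Longrightarrow> finite F \<Longrightarrow> (\<And>f. f \<in> F \<Longrightarrow> fsupp (t f)) \<Longrightarrow>
     mul2 m s (lincomb F c t) = lincomb F c (\<lambda>f. mul2 m s (t f))"
  by (erule kernel_map_lincomb) (simp_all add: mul2_Sum_any_right)

lemma comulc_lincomb:
  "finite F \<Longrightarrow> (\<And>f. f \<in> F \<Longrightarrow> fsupp (x f)) \<Longrightarrow>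
     comulc d (lincomb F c x) = lincomb F c (\<lambda>f. comulc d (x f))"
  by (erule kernel_map_lincomb) (simp_all add: comulc_Sum_any)

lemma mult_map_lincomb:
  "finite F \<Longrightarrow> (\<And>f. f \<in> F \<Longrightarrow> fsupp (t f)) \<Longrightarrow>
     mult_map m (lincomb F c t) = lincomb F c (\<lambda>f. mult_map m (t f))"
  by (erule kernel_map_lincomb) (simp_all add: mult_map_Sum_any)

lemma id_eps_lincomb:
  "finite F \<Longrightarrow> (\<And>f. f \<in> F \<Longrightarrow> fsupp (t f)) \<Longrightarrow>
     id_eps e (lincomb F c t) = lincomb F c (\<lambda>f. id_eps e (t f))"
  by (erule kernel_map_lincomb) (simp_all add: id_eps_Sum_any)

lemma eps_id_lincomb:
  "finite F \<Longrightarrow> (\<And>f. f \<in> F \<Longrightarrow> fsupp (t f)) \<Longrightarrow>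
     eps_id e (lincomb F c t) = lincomb F c (\<lambda>f. eps_id e (t f))"
  by (erule kernel_map_lincomb) (simp_all add: eps_id_Sum_any)

lemma mulc_lincomb_lincomb:
  assumes "finite R" "finite S" "\<And>r. r \<in> R \<Longrightarrow> fsupp (x r)" "\<And>s. s \<in> S \<Longrightarrow> fsupp (y s)"
  shows "mulc m (lincomb R c x) (lincomb S d y) =
           lincomb (R \<times> S) (\<lambda>p. c (fst p) * d (snd p)) (\<lambda>p. mulc m (x (fst p)) (y (snd p)))"
proof -
  have "mulc m (lincomb R c x) (lincomb S d y) = lincomb R c (\<lambda>r. mulc m (x r) (lincomb S d y))"
    by (rule mulc_lincomb_left) (simp_all add: fsupp_lincomb assms)
  also have "\<dots> = lincomb R c (\<lambda>r. lincomb S d (\<lambda>s. mulc m (x r) (y s)))"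
    by (rule lincomb_eqI) (simp add: mulc_lincomb_right assms)
  finally show ?thesis
    by (simp add: lincomb_lincomb)
qed

lemma mul2_lincomb_lincomb:
  assumes "finite R" "finite S" "\<And>r. r \<in> R \<Longrightarrow> fsupp (t r)" "\<And>s. s \<in> S \<Longrightarrow> fsupp (u s)"
  shows "mul2 m (lincomb R c t) (lincomb S d u) =
           lincomb (R \<times> S) (\<lambda>p. c (fst p) * d (snd p)) (\<lambda>p. mul2 m (t (fst p)) (u (snd p)))"
proof -
  have "mul2 m (lincomb R c t) (lincomb S d u) = lincomb R c (\<lambda>r. mul2 m (t r) (lincomb S d u))"
    by (rule mul2_lincomb_left) (simp_all add: fsupp_lincomb assms)
  also have "\<dots> = lincomb R c (\<lambda>r. lincomb S d (\<lambda>s. mul2 m (t r) (u s)))"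
    by (rule lincomb_eqI) (simp add: mul2_lincomb_right assms)
  finally show ?thesis
    by (simp add: lincomb_lincomb)
qed

lemma mult_map_tensor: "mult_map m (tensor x y) = mulc m x y"
  unfolding mult_map_def mulc_def support_tensor sum.cartesian_product
  by (intro ext sum.cong) (auto simp: tensor_def)

lemma id_eps_tensor: "id_eps e (tensor x y) = (\<lambda>i. x i * counitc e y)"
proof
  fix i
  show "id_eps e (tensor x y) i = x i * counitc e y"
    by (cases "x i = 0") (simp_all add: id_eps_def counitc_def tensor_def sum_distrib_left mult.assoc)
qed

lemma eps_id_tensor: "eps_id e (tensor x y) = (\<lambda>l. counitc e x * y l)"
proof
  fix l
  show "eps_id e (tensor x y) l = counitc e x * y l"
    by (cases "y l = 0") (simp_all add: eps_id_def counitc_def tensor_def sum_distrib_left ac_simps)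
qed

lemma mul2_tensor: "mul2 m (tensor x y) (tensor x' y') = tensor (mulc m x x') (mulc m y y')"
proof (rule ext, clarify)
  fix i j
  have "mul2 m (tensor x y) (tensor x' y') (i, j) =
    (\<Sum>k | x k \<noteq> 0. \<Sum>l | y l \<noteq> 0. \<Sum>k' | x' k' \<noteq> 0. \<Sum>l' | y' l' \<noteq> 0.
        (x k * x' k' * m k k' i) * (y l * y' l' * m l l' j))"
    unfolding mul2_def support_tensor
    by (simp only: sum.cartesian_product') (simp add: tensor_def ac_simps)
  also have "\<dots> = (\<Sum>k | x k \<noteq> 0. \<Sum>k' | x' k' \<noteq> 0. \<Sum>l | y l \<noteq> 0. \<Sum>l' | y' l' \<noteq> 0.
        (x k * x' k' * m k k' i) * (y l * y' l' * m l l' j))"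
    by (rule sum.cong[OF refl], rule sum.swap)
  also have "\<dots> = mulc m x x' i * mulc m y y' j"
    unfolding mulc_def by (simp only: sum_distrib_right) (simp only: sum_distrib_left)
  finally show "mul2 m (tensor x y) (tensor x' y') (i, j) = tensor (mulc m x x') (mulc m y y') (i, j)"
    by (simp add: tensor_def)
qed

lemma mulc_scale:
  "mulc m (\<lambda>i. a * x i) (\<lambda>i. b * y i) = (\<lambda>i. a * b * mulc m x y i)"
proof (cases "a = 0 \<or> b = 0")
  case True
  then show ?thesis
    by (auto simp: mulc_def)
next
  case False
  then show ?thesis
    by (simp add: mulc_def sum_distrib_left ac_simps)
qed

lemma id_eps_lincomb_tensor:
  "finite R \<Longrightarrow> (\<And>r. r \<in> R \<Longrightarrow> fsupp (x r)) \<Longrightarrow> (\<And>r. r \<in> R \<Longrightarrow> fsupp (y r)) \<Longrightarrow>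
     id_eps e (lincomb R (\<lambda>_. 1) (\<lambda>r. tensor (x r) (y r))) = lincomb R (\<lambda>r. counitc e (y r)) x"
  by (simp add: id_eps_lincomb fsupp_tensor id_eps_tensor cong: lincomb_cong)
    (simp add: lincomb_def mult.commute)

lemma eps_id_lincomb_tensor:
  "finite R \<Longrightarrow> (\<And>r. r \<in> R \<Longrightarrow> fsupp (x r)) \<Longrightarrow> (\<And>r. r \<in> R \<Longrightarrow> fsupp (y r)) \<Longrightarrow>
     eps_id e (lincomb R (\<lambda>_. 1) (\<lambda>r. tensor (x r) (y r))) = lincomb R (\<lambda>r. counitc e (x r)) y"
  by (simp add: eps_id_lincomb fsupp_tensor eps_id_tensor cong: lincomb_cong) (simp add: lincomb_def)

section \<open>Tensor spans\<close>

lemma tspanE: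
  assumes "t \<in> tspan S T"
  obtains F :: "nat set" and x y
  where "finite F" "\<And>f. f \<in> F \<Longrightarrow> x f \<in> S" "\<And>f. f \<in> F \<Longrightarrow> y f \<in> T"
    and "t = lincomb F (\<lambda>_. 1) (\<lambda>f. tensor (x f) (y f))"
proof -
  from assms obtain n :: nat and x y where "\<forall>k<n. x k \<in> S \<and> y k \<in> T" "t = (\<lambda>p. \<Sum>k<n. tensor (x k) (y k) p)"
    unfolding tspan_def by blast
  then show ?thesis
    by (intro that[of "{..<n}" x y]) (auto simp: lincomb_def)
qed

lemma tensor_in_tspan: "x \<in> S \<Longrightarrow> y \<in> T \<Longrightarrow> tensor x y \<in> tspan S T"
  unfolding tspan_def by (intro CollectI exI[of _ 1] exI[of _ "\<lambda>_. x"] exI[of _ "\<lambda>_. y"]) auto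

lemma zero_in_tspan: "(\<lambda>_. 0) \<in> tspan S T"
  unfolding tspan_def by (intro CollectI exI[of _ 0]) auto

lemma tspan_add:
  assumes "t \<in> tspan S T" "t' \<in> tspan S T"
  shows "(\<lambda>p. t p + t' p) \<in> tspan S T"
proof -
  obtain n :: nat and x y where t: "\<forall>k<n. x k \<in> S \<and> y k \<in> T" "t = (\<lambda>p. \<Sum>k<n. tensor (x k) (y k) p)"
    using assms(1) unfolding tspan_def by blast
  obtain n' :: nat and x' y' where t': "\<forall>k<n'. x' k \<in> S \<and> y' k \<in> T" "t' = (\<lambda>p. \<Sum>k<n'. tensor (x' k) (y' k) p)"
    using assms(2) unfolding tspan_def by blast
  define x'' where "x'' k = (if k < n then x k else x' (k - n))" for k
  define y'' where "y'' k = (if k < n then y k else y' (k - n))" for k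
  have split: "(\<Sum>k<n + n'. g k) = (\<Sum>k<n. g k) + (\<Sum>k<n'. g (k + n))" for g :: "nat \<Rightarrow> complex"
    by (induction n') (auto simp: ac_simps)
  have "\<forall>k<n + n'. x'' k \<in> S \<and> y'' k \<in> T"
    using t t' by (auto simp: x''_def y''_def)
  moreover have "(\<lambda>p. t p + t' p) = (\<lambda>p. \<Sum>k<n + n'. tensor (x'' k) (y'' k) p)"
    by (simp add: t t' x''_def y''_def split)
  ultimately show ?thesis
    unfolding tspan_def by blast
qed

lemma tspan_scale:
  assumes "csubspace S" "t \<in> tspan S T"
  shows "(\<lambda>p. c * t p) \<in> tspan S T"
proof -
  obtain n :: nat and x y where t: "\<forall>k<n. x k \<in> S \<and> y k \<in> T" "t = (\<lambda>p. \<Sum>k<n. tensor (x k) (y k) p)"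
    using assms(2) unfolding tspan_def by blast
  define x' where "x' k = (\<lambda>i. c * x k i)" for k
  have "\<forall>k<n. x' k \<in> S \<and> y k \<in> T"
    using t(1) assms(1) by (auto simp: csubspace_def x'_def)
  moreover have "(\<lambda>p. c * t p) = (\<lambda>p. \<Sum>k<n. tensor (x' k) (y k) p)"
    by (auto simp: t(2) x'_def tensor_def sum_distrib_left mult.assoc)
  ultimately show ?thesis
    unfolding tspan_def by blast
qed

lemma tspan_lincomb:
  assumes "csubspace S" "finite F" "\<And>f. f \<in> F \<Longrightarrow> t f \<in> tspan S T"
  shows "lincomb F c t \<in> tspan S T"
  using assms(2,3)
proof (induction F rule: finite_induct)
  case empty
  then show ?case
    by (simp add: lincomb_def zero_in_tspan)
next
  case (insert f F)
  then have "(\<lambda>p. c f * t f p) \<in> tspan S T" "lincomb F c t \<in> tspan S T"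
    by (simp_all add: tspan_scale[OF assms(1)])
  then show ?case
    using insert.hyps by (simp add: lincomb_def tspan_add)
qed

lemma tspan_fsupp:
  assumes "S \<subseteq> Collect fsupp" "T \<subseteq> Collect fsupp" "t \<in> tspan S T"
  shows "fsupp t"
  using assms(3)
proof (rule tspanE)
  fix F :: "nat set" and x y
  assume "finite F" "\<And>f. f \<in> F \<Longrightarrow> x f \<in> S" "\<And>f. f \<in> F \<Longrightarrow> y f \<in> T"
    and "t = lincomb F (\<lambda>_. 1) (\<lambda>f. tensor (x f) (y f))"
  with assms(1,2) show ?thesis
    by (auto intro!: fsupp_lincomb fsupp_tensor)
qed
section \<open>Graded bialgebras\<close>

locale graded_bialg =
  fixes deg :: "'i \<Rightarrow> nat" and m :: "'i \<Rightarrow> 'i \<Rightarrow> 'i \<Rightarrow> complex"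
    and u :: "'i \<Rightarrow> complex" and d :: "'i \<Rightarrow> 'i \<Rightarrow> 'i \<Rightarrow> complex" and e :: "'i \<Rightarrow> complex"
  assumes graded_bialgebra: "graded_bialgebra deg m u d e"
begin

lemma finite_level: "finite {i. deg i = n}"
  using graded_bialgebra by (simp add: graded_bialgebra_def)

lemma finite_deg_le: "finite {i. deg i \<le> n}"
proof -
  have "{i. deg i \<le> n} = (\<Union>k\<le>n. {i. deg i = k})"
    by auto
  then show ?thesis
    by (simp add: finite_level)
qed

lemma mult_deg: "m k l i \<noteq> 0 \<Longrightarrow> deg i = deg k + deg l"
  using graded_bialgebra by (simp add: graded_bialgebra_def)

lemma comult_deg: "d i k l \<noteq> 0 \<Longrightarrow> deg i = deg k + deg l"
  using graded_bialgebra by (simp add: graded_bialgebra_def)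

lemma mulc_assoc:
  "fsupp x \<Longrightarrow> fsupp y \<Longrightarrow> fsupp z \<Longrightarrow> mulc m (mulc m x y) z = mulc m x (mulc m y z)"
  using graded_bialgebra by (simp add: graded_bialgebra_def)

lemma mulc_unit_left: "fsupp x \<Longrightarrow> mulc m u x = x"
  using graded_bialgebra by (simp add: graded_bialgebra_def)

lemma mulc_unit_right: "fsupp x \<Longrightarrow> mulc m x u = x"
  using graded_bialgebra by (simp add: graded_bialgebra_def)

lemma comulc_mulc:
  "fsupp x \<Longrightarrow> fsupp y \<Longrightarrow> comulc d (mulc m x y) = mul2 m (comulc d x) (comulc d y)"
  using graded_bialgebra by (simp add: graded_bialgebra_def)

lemma id_eps_comulc: "fsupp x \<Longrightarrow> id_eps e (comulc d x) = x"
  using graded_bialgebra by (simp add: graded_bialgebra_def)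

lemma eps_id_comulc: "fsupp x \<Longrightarrow> eps_id e (comulc d x) = x"
  using graded_bialgebra by (simp add: graded_bialgebra_def)

lemma counitc_mulc:
  "fsupp x \<Longrightarrow> fsupp y \<Longrightarrow> counitc e (mulc m x y) = counitc e x * counitc e y"
  using graded_bialgebra by (simp add: graded_bialgebra_def)

lemma counitc_unit: "counitc e u = 1"
  using graded_bialgebra by (simp add: graded_bialgebra_def)

lemma finite_mult_support: "finite {p. m (fst p) (snd p) i \<noteq> 0}"
  by (rule finite_subset[of _ "{k. deg k \<le> deg i} \<times> {k. deg k \<le> deg i}"])
    (auto simp: finite_deg_le dest: mult_deg)

lemma mulc_fsupp:
  assumes "fsupp x" "fsupp y"
  shows "fsupp (mulc m x y)"
  unfolding fsupp_def
proof (rule finite_subset)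
  show "{i. mulc m x y i \<noteq> 0} \<subseteq> (\<Union>k\<in>{k. x k \<noteq> 0}. \<Union>l\<in>{l. y l \<noteq> 0}. {i. deg i = deg k + deg l})"
    by (fastforce simp: mulc_def elim!: sum.not_neutral_contains_not_neutral dest: mult_deg)
  show "finite (\<Union>k\<in>{k. x k \<noteq> 0}. \<Union>l\<in>{l. y l \<noteq> 0}. {i. deg i = deg k + deg l})"
    using assms by (simp add: fsupp_def finite_level)
qed

lemma comulc_fsupp:
  assumes "fsupp x"
  shows "fsupp (comulc d x)"
  unfolding fsupp_def
proof (rule finite_subset)
  show "{p. comulc d x p \<noteq> 0} \<subseteq> (\<Union>i\<in>{i. x i \<noteq> 0}. {k. deg k \<le> deg i} \<times> {l. deg l \<le> deg i})"
    by (fastforce simp: comulc_def elim!: sum.not_neutral_contains_not_neutral dest: comult_deg)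
  show "finite (\<Union>i\<in>{i. x i \<noteq> 0}. {k. deg k \<le> deg i} \<times> {l. deg l \<le> deg i})"
    using assms by (simp add: fsupp_def finite_deg_le)
qed

end

section \<open>The projections Pi_1 and Pi_2\<close>

locale factorization = graded_bialg deg m u d e
  for deg :: "'i \<Rightarrow> nat" and m u d e +
  fixes A1 A2 :: "('i \<Rightarrow> complex) set"
  assumes subalgebra1: "subalgebra m u A1"
    and subalgebra2: "subalgebra m u A2"
    and mult_map_bij: "bij_betw (mult_map m) (tspan A1 A2) (Collect fsupp)"
begin

abbreviation "\<pi>\<^sub>1 \<equiv> Pi1 m e A1 A2"
abbreviation "\<pi>\<^sub>2 \<equiv> Pi2 m e A1 A2"

lemma A1_fsupp: "x \<in> A1 \<Longrightarrow> fsupp x"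
  using subalgebra1 by (auto simp: subalgebra_def csubspace_def)

lemma A2_fsupp: "x \<in> A2 \<Longrightarrow> fsupp x"
  using subalgebra2 by (auto simp: subalgebra_def csubspace_def)

lemma unit_in_A1: "u \<in> A1"
  using subalgebra1 by (simp add: subalgebra_def)

lemma unit_in_A2: "u \<in> A2"
  using subalgebra2 by (simp add: subalgebra_def)

lemma mulc_in_A1: "x \<in> A1 \<Longrightarrow> y \<in> A1 \<Longrightarrow> mulc m x y \<in> A1"
  using subalgebra1 by (simp add: subalgebra_def)

lemma mulc_in_A2: "x \<in> A2 \<Longrightarrow> y \<in> A2 \<Longrightarrow> mulc m x y \<in> A2"
  using subalgebra2 by (simp add: subalgebra_def)

lemma tspan_A1_A2_fsupp: "t \<in> tspan A1 A2 \<Longrightarrow> fsupp t"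
  by (rule tspan_fsupp) (auto intro: A1_fsupp A2_fsupp)

lemma mult_map_preimage: "fsupp x \<Longrightarrow> \<exists>t\<in>tspan A1 A2. mult_map m t = x"
  using mult_map_bij by (metis bij_betw_imp_surj_on imageE mem_Collect_eq)

lemma Pi1_mult_map: "t \<in> tspan A1 A2 \<Longrightarrow> \<pi>\<^sub>1 (mult_map m t) = id_eps e t"
  unfolding Pi1_def
  by (rule arg_cong[where f = "id_eps e"], rule the_equality)
    (use mult_map_bij in \<open>auto simp: bij_betw_def inj_on_def\<close>)

lemma Pi2_mult_map: "t \<in> tspan A1 A2 \<Longrightarrow> \<pi>\<^sub>2 (mult_map m t) = eps_id e t"
  unfolding Pi2_def
  by (rule arg_cong[where f = "eps_id e"], rule the_equality)
    (use mult_map_bij in \<open>auto simp: bij_betw_def inj_on_def\<close>)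

lemma Pi1_fsupp: "fsupp x \<Longrightarrow> fsupp (\<pi>\<^sub>1 x)"
  using mult_map_preimage Pi1_mult_map tspan_A1_A2_fsupp id_eps_fsupp by metis

lemma Pi2_fsupp: "fsupp x \<Longrightarrow> fsupp (\<pi>\<^sub>2 x)"
  using mult_map_preimage Pi2_mult_map tspan_A1_A2_fsupp eps_id_fsupp by metis

lemma lincomb_via_factorization:
  fixes F :: "'f set"
  assumes through: "\<And>t. t \<in> tspan A1 A2 \<Longrightarrow> g (mult_map m t) = h t"
    and h_lincomb: "\<And>(G :: 'f set) c t. finite G \<Longrightarrow> (\<And>f. f \<in> G \<Longrightarrow> fsupp (t f)) \<Longrightarrow>
                      h (lincomb G c t) = lincomb G c (\<lambda>f. h (t f))"
    and "finite F" "\<And>f. f \<in> F \<Longrightarrow> fsupp (x f)"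
  shows "g (lincomb F c x) = lincomb F c (\<lambda>f. g (x f))"
proof -
  have "\<forall>f\<in>F. \<exists>t. t \<in> tspan A1 A2 \<and> mult_map m t = x f"
    using assms(4) mult_map_preimage by blast
  then obtain t where t: "\<And>f. f \<in> F \<Longrightarrow> t f \<in> tspan A1 A2 \<and> mult_map m (t f) = x f"
    by (metis bchoice)
  have t_fsupp: "\<And>f. f \<in> F \<Longrightarrow> fsupp (t f)"
    using t tspan_A1_A2_fsupp by blast
  have "lincomb F c t \<in> tspan A1 A2"
    using subalgebra1 t by (intro tspan_lincomb assms(3)) (auto simp: subalgebra_def)
  moreover have "mult_map m (lincomb F c t) = lincomb F c x"
    using t by (simp add: mult_map_lincomb assms(3) t_fsupp cong: lincomb_cong)
  ultimately have "g (lincomb F c x) = h (lincomb F c t)"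
    using through by metis
  also have "\<dots> = lincomb F c (\<lambda>f. h (t f))"
    by (rule h_lincomb[OF assms(3) t_fsupp])
  also have "\<dots> = lincomb F c (\<lambda>f. g (x f))"
    using t through by (intro lincomb_eqI) metis
  finally show ?thesis .
qed

lemma Pi1_lincomb:
  "finite F \<Longrightarrow> (\<And>f. f \<in> F \<Longrightarrow> fsupp (x f)) \<Longrightarrow>
     \<pi>\<^sub>1 (lincomb F c x) = lincomb F c (\<lambda>f. \<pi>\<^sub>1 (x f))"
  by (rule lincomb_via_factorization[OF Pi1_mult_map id_eps_lincomb])

lemma Pi2_lincomb:
  "finite F \<Longrightarrow> (\<And>f. f \<in> F \<Longrightarrow> fsupp (x f)) \<Longrightarrow>
     \<pi>\<^sub>2 (lincomb F c x) = lincomb F c (\<lambda>f. \<pi>\<^sub>2 (x f))"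
  by (rule lincomb_via_factorization[OF Pi2_mult_map eps_id_lincomb])

lemma Pi1_mulc: "x \<in> A1 \<Longrightarrow> y \<in> A2 \<Longrightarrow> \<pi>\<^sub>1 (mulc m x y) = (\<lambda>i. x i * counitc e y)"
  by (metis Pi1_mult_map id_eps_tensor mult_map_tensor tensor_in_tspan)

lemma Pi2_mulc: "x \<in> A1 \<Longrightarrow> y \<in> A2 \<Longrightarrow> \<pi>\<^sub>2 (mulc m x y) = (\<lambda>i. counitc e x * y i)"
  by (metis Pi2_mult_map eps_id_tensor mult_map_tensor tensor_in_tspan)

lemma Pi1_A1: "x \<in> A1 \<Longrightarrow> \<pi>\<^sub>1 x = x"
  using Pi1_mulc[OF _ unit_in_A2] by (simp add: mulc_unit_right A1_fsupp counitc_unit)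

lemma Pi2_A2: "x \<in> A2 \<Longrightarrow> \<pi>\<^sub>2 x = x"
  using Pi2_mulc[OF unit_in_A1] by (simp add: mulc_unit_left A2_fsupp counitc_unit)

lemma factorizationE:
  assumes "fsupp y"
  obtains F :: "nat set" and x1 x2
  where "finite F" "\<And>f. f \<in> F \<Longrightarrow> x1 f \<in> A1" "\<And>f. f \<in> F \<Longrightarrow> x2 f \<in> A2"
    and "y = lincomb F (\<lambda>_. 1) (\<lambda>f. mulc m (x1 f) (x2 f))"
proof -
  obtain t where t: "t \<in> tspan A1 A2" "mult_map m t = y"
    using mult_map_preimage[OF assms] by blast
  from t(1) show ?thesis
  proof (rule tspanE)
    fix F :: "nat set" and x1 x2
    assume F: "finite F" "\<And>f. f \<in> F \<Longrightarrow> x1 f \<in> A1" "\<And>f. f \<in> F \<Longrightarrow> x2 f \<in> A2"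
      and "t = lincomb F (\<lambda>_. 1) (\<lambda>f. tensor (x1 f) (x2 f))"
    with t(2) have "y = lincomb F (\<lambda>_. 1) (\<lambda>f. mulc m (x1 f) (x2 f))"
      by (simp add: mult_map_lincomb fsupp_tensor A1_fsupp A2_fsupp mult_map_tensor)
    with F show ?thesis
      by (rule that)
  qed
qed

lemma Pi1_mulc_A2:
  assumes y: "fsupp y" and w: "w \<in> A2"
  shows "\<pi>\<^sub>1 (mulc m y w) = (\<lambda>i. \<pi>\<^sub>1 y i * counitc e w)"
  using y
proof (rule factorizationE)
  fix F :: "nat set" and x1 x2
  assume F: "finite F" "\<And>f. f \<in> F \<Longrightarrow> x1 f \<in> A1" "\<And>f. f \<in> F \<Longrightarrow> x2 f \<in> A2"
    and y_eq: "y = lincomb F (\<lambda>_. 1) (\<lambda>f. mulc m (x1 f) (x2 f))"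
  note fsupps = A1_fsupp[OF F(2)] A2_fsupp[OF F(3)] A2_fsupp[OF w]
  have "mulc m y w = lincomb F (\<lambda>_. 1) (\<lambda>f. mulc m (mulc m (x1 f) (x2 f)) w)"
    unfolding y_eq by (rule mulc_lincomb_left) (simp_all add: F fsupps mulc_fsupp)
  also have "\<dots> = lincomb F (\<lambda>_. 1) (\<lambda>f. mulc m (x1 f) (mulc m (x2 f) w))"
    by (intro lincomb_eqI) (simp add: fsupps mulc_assoc)
  finally have "\<pi>\<^sub>1 (mulc m y w) = lincomb F (\<lambda>_. 1) (\<lambda>f. \<pi>\<^sub>1 (mulc m (x1 f) (mulc m (x2 f) w)))"
    by (simp add: Pi1_lincomb F fsupps mulc_fsupp)
  also have "\<dots> = lincomb F (\<lambda>f. counitc e (x2 f) * counitc e w) x1"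
    by (intro lincomb_eqI) (simp add: F w Pi1_mulc mulc_in_A2 counitc_mulc fsupps)
  also have "\<dots> = (\<lambda>i. \<pi>\<^sub>1 y i * counitc e w)"
  proof -
    have "\<pi>\<^sub>1 y = lincomb F (\<lambda>_. 1) (\<lambda>f. \<pi>\<^sub>1 (mulc m (x1 f) (x2 f)))"
      unfolding y_eq by (rule Pi1_lincomb) (simp_all add: F fsupps mulc_fsupp)
    also have "\<dots> = lincomb F (\<lambda>f. counitc e (x2 f)) x1"
      by (intro lincomb_eqI) (simp add: F Pi1_mulc)
    finally show ?thesis
      by (simp add: lincomb_def sum_distrib_left ac_simps)
  qed
  finally show ?thesis .
qed

lemma Pi2_mulc_A1:
  assumes y: "fsupp y" and w: "w \<in> A1"
  shows "\<pi>\<^sub>2 (mulc m w y) = (\<lambda>i. counitc e w * \<pi>\<^sub>2 y i)"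
  using y
proof (rule factorizationE)
  fix F :: "nat set" and x1 x2
  assume F: "finite F" "\<And>f. f \<in> F \<Longrightarrow> x1 f \<in> A1" "\<And>f. f \<in> F \<Longrightarrow> x2 f \<in> A2"
    and y_eq: "y = lincomb F (\<lambda>_. 1) (\<lambda>f. mulc m (x1 f) (x2 f))"
  note fsupps = A1_fsupp[OF F(2)] A2_fsupp[OF F(3)] A1_fsupp[OF w]
  have "mulc m w y = lincomb F (\<lambda>_. 1) (\<lambda>f. mulc m w (mulc m (x1 f) (x2 f)))"
    unfolding y_eq by (rule mulc_lincomb_right) (simp_all add: F fsupps mulc_fsupp)
  also have "\<dots> = lincomb F (\<lambda>_. 1) (\<lambda>f. mulc m (mulc m w (x1 f)) (x2 f))"
    by (intro lincomb_eqI) (simp add: fsupps mulc_assoc)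
  finally have "\<pi>\<^sub>2 (mulc m w y) = lincomb F (\<lambda>_. 1) (\<lambda>f. \<pi>\<^sub>2 (mulc m (mulc m w (x1 f)) (x2 f)))"
    by (simp add: Pi2_lincomb F fsupps mulc_fsupp)
  also have "\<dots> = lincomb F (\<lambda>f. counitc e w * counitc e (x1 f)) x2"
    by (intro lincomb_eqI) (simp add: F w Pi2_mulc mulc_in_A1 counitc_mulc fsupps)
  also have "\<dots> = (\<lambda>i. counitc e w * \<pi>\<^sub>2 y i)"
  proof -
    have "\<pi>\<^sub>2 y = lincomb F (\<lambda>_. 1) (\<lambda>f. \<pi>\<^sub>2 (mulc m (x1 f) (x2 f)))"
      unfolding y_eq by (rule Pi2_lincomb) (simp_all add: F fsupps mulc_fsupp)
    also have "\<dots> = lincomb F (\<lambda>f. counitc e (x1 f)) x2"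
      by (intro lincomb_eqI) (simp add: F Pi2_mulc)
    finally show ?thesis
      by (simp add: lincomb_def sum_distrib_left ac_simps)
  qed
  finally show ?thesis .
qed

definition mult_proj :: "('i \<times> 'i \<Rightarrow> complex) \<Rightarrow> 'i \<Rightarrow> complex" where
  "mult_proj t = (\<lambda>i. Sum_any (\<lambda>p. t p * mulc m (\<pi>\<^sub>1 (delta (fst p))) (\<pi>\<^sub>2 (delta (snd p))) i))"

lemma mult_proj_lincomb:
  "finite F \<Longrightarrow> (\<And>f. f \<in> F \<Longrightarrow> fsupp (t f)) \<Longrightarrow>
     mult_proj (lincomb F c t) = lincomb F c (\<lambda>f. mult_proj (t f))"
  by (erule kernel_map_lincomb) (simp_all add: mult_proj_def)

lemma mult_proj_eq_lincomb:
  "fsupp t \<Longrightarrow> mult_proj t =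
     lincomb {p. t p \<noteq> 0} t (\<lambda>p. mulc m (\<pi>\<^sub>1 (delta (fst p))) (\<pi>\<^sub>2 (delta (snd p))))"
  by (simp add: mult_proj_def lincomb_def sum_support_eq_Sum_any)

lemma mult_proj_tensor:
  assumes "fsupp x" "fsupp y"
  shows "mult_proj (tensor x y) = mulc m (\<pi>\<^sub>1 x) (\<pi>\<^sub>2 y)"
proof
  fix i
  let ?X = "{k. x k \<noteq> 0}" and ?Y = "{l. y l \<noteq> 0}"
  have fin: "finite ?X" "finite ?Y"
    using assms by (simp_all add: fsupp_def)
  have "mulc m (\<pi>\<^sub>1 x) (\<pi>\<^sub>2 y) = mulc m (\<pi>\<^sub>1 (lincomb ?X x delta)) (\<pi>\<^sub>2 (lincomb ?Y y delta))"
    using fin by (simp add: lincomb_delta)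
  also have "\<dots> = mulc m (lincomb ?X x (\<lambda>k. \<pi>\<^sub>1 (delta k))) (lincomb ?Y y (\<lambda>l. \<pi>\<^sub>2 (delta l)))"
    using fin by (simp add: Pi1_lincomb Pi2_lincomb)
  also have "\<dots> = lincomb (?X \<times> ?Y) (\<lambda>p. x (fst p) * y (snd p))
                    (\<lambda>p. mulc m (\<pi>\<^sub>1 (delta (fst p))) (\<pi>\<^sub>2 (delta (snd p))))"
    using fin by (simp add: mulc_lincomb_lincomb Pi1_fsupp Pi2_fsupp)
  finally have "mulc m (\<pi>\<^sub>1 x) (\<pi>\<^sub>2 y) i = (\<Sum>p\<in>?X \<times> ?Y.
                   tensor x y p * mulc m (\<pi>\<^sub>1 (delta (fst p))) (\<pi>\<^sub>2 (delta (snd p))) i)"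
    by (simp add: lincomb_def tensor_def split_def)
  also have "\<dots> = mult_proj (tensor x y) i"
    unfolding mult_proj_def using fin
    by (intro Sum_any.expand_superset[symmetric]) (auto simp: tensor_def)
  finally show "mult_proj (tensor x y) i = mulc m (\<pi>\<^sub>1 x) (\<pi>\<^sub>2 y) i" ..
qed

end

locale coideal_factorization = factorization +
  assumes comulc_A1: "\<forall>x\<in>A1. comulc d x \<in> tspan (Collect fsupp) A1"
    and comulc_A2: "\<forall>x\<in>A2. comulc d x \<in> tspan A2 (Collect fsupp)"
begin

lemma mult_proj_comulc_mulc:
  assumes x1: "x1 \<in> A1" and x2: "x2 \<in> A2"
  shows "mult_proj (comulc d (mulc m x1 x2)) = mulc m x1 x2"
proof -
  obtain R :: "nat set" and u v
    where R: "finite R" "\<And>r. r \<in> R \<Longrightarrow> fsupp (u r)" "\<And>r. r \<in> R \<Longrightarrow> v r \<in> A1"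
    and comulc_x1: "comulc d x1 = lincomb R (\<lambda>_. 1) (\<lambda>r. tensor (u r) (v r))"
    using bspec[OF comulc_A1 x1] by (rule tspanE) auto
  obtain S :: "nat set" and w z
    where S: "finite S" "\<And>s. s \<in> S \<Longrightarrow> w s \<in> A2" "\<And>s. s \<in> S \<Longrightarrow> fsupp (z s)"
    and comulc_x2: "comulc d x2 = lincomb S (\<lambda>_. 1) (\<lambda>s. tensor (w s) (z s))"
    using bspec[OF comulc_A2 x2] by (rule tspanE) auto
  note fsupps = R(2) A1_fsupp[OF R(3)] A2_fsupp[OF S(2)] S(3)
  have x1_eq: "x1 = lincomb R (\<lambda>r. counitc e (v r)) u"
    using id_eps_comulc[OF A1_fsupp[OF x1]] by (simp add: comulc_x1 id_eps_lincomb_tensor R(1) fsupps)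
  have x2_eq: "x2 = lincomb S (\<lambda>s. counitc e (w s)) z"
    using eps_id_comulc[OF A2_fsupp[OF x2]] by (simp add: comulc_x2 eps_id_lincomb_tensor S(1) fsupps)
  have "comulc d (mulc m x1 x2) = mul2 m (comulc d x1) (comulc d x2)"
    by (simp add: comulc_mulc A1_fsupp x1 A2_fsupp x2)
  also have "\<dots> = lincomb (R \<times> S) (\<lambda>_. 1)
      (\<lambda>p. tensor (mulc m (u (fst p)) (w (snd p))) (mulc m (v (fst p)) (z (snd p))))"
    by (simp add: comulc_x1 comulc_x2 mul2_lincomb_lincomb R(1) S(1) fsupps fsupp_tensor mul2_tensor)
  finally have comulc_eq: "comulc d (mulc m x1 x2) = \<dots>" .
  have products_fsupp: "fsupp (mulc m (u (fst p)) (w (snd p)))" "fsupp (mulc m (v (fst p)) (z (snd p)))"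
    if "p \<in> R \<times> S" for p
    using that by (auto simp: fsupps mulc_fsupp)
  have "mult_proj (comulc d (mulc m x1 x2)) = lincomb (R \<times> S) (\<lambda>_. 1)
      (\<lambda>p. mult_proj (tensor (mulc m (u (fst p)) (w (snd p))) (mulc m (v (fst p)) (z (snd p)))))"
    unfolding comulc_eq by (rule mult_proj_lincomb) (simp_all add: R(1) S(1) products_fsupp fsupp_tensor)
  also have "\<dots> = lincomb (R \<times> S) (\<lambda>_. 1)
      (\<lambda>p. mulc m (\<pi>\<^sub>1 (mulc m (u (fst p)) (w (snd p)))) (\<pi>\<^sub>2 (mulc m (v (fst p)) (z (snd p)))))"
    by (rule lincomb_cong) (simp_all add: mult_proj_tensor products_fsupp)
  also have "\<dots> = lincomb (R \<times> S) (\<lambda>p. counitc e (v (fst p)) * counitc e (w (snd p)))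
      (\<lambda>p. mulc m (\<pi>\<^sub>1 (u (fst p))) (\<pi>\<^sub>2 (z (snd p))))"
    by (intro lincomb_eqI)
      (auto simp: Pi1_mulc_A2 Pi2_mulc_A1 R S fsupps mult.commute[of "\<pi>\<^sub>1 _ _"] mulc_scale)
  also have "\<dots> = mulc m (lincomb R (\<lambda>r. counitc e (v r)) (\<lambda>r. \<pi>\<^sub>1 (u r)))
                           (lincomb S (\<lambda>s. counitc e (w s)) (\<lambda>s. \<pi>\<^sub>2 (z s)))"
    by (simp add: mulc_lincomb_lincomb R(1) S(1) fsupps Pi1_fsupp Pi2_fsupp)
  also have "\<dots> = mulc m (\<pi>\<^sub>1 x1) (\<pi>\<^sub>2 x2)"
    by (simp add: x1_eq x2_eq Pi1_lincomb Pi2_lincomb R(1) S(1) fsupps)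
  finally show ?thesis
    by (simp add: Pi1_A1 x1 Pi2_A2 x2)
qed

lemma mult_proj_comulc: "fsupp x \<Longrightarrow> mult_proj (comulc d x) = x"
proof (erule factorizationE)
  fix F :: "nat set" and x1 x2
  assume F: "finite F" "\<And>f. f \<in> F \<Longrightarrow> x1 f \<in> A1" "\<And>f. f \<in> F \<Longrightarrow> x2 f \<in> A2"
    and x_eq: "x = lincomb F (\<lambda>_. 1) (\<lambda>f. mulc m (x1 f) (x2 f))"
  have fsupps: "\<And>f. f \<in> F \<Longrightarrow> fsupp (mulc m (x1 f) (x2 f))"
    using F by (simp add: mulc_fsupp A1_fsupp A2_fsupp)
  show ?thesis
    by (simp add: x_eq comulc_lincomb mult_proj_lincomb F fsupps comulc_fsupp mult_proj_comulc_mulc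
        cong: lincomb_cong)
qed

end

section \<open>Dual bases and the canonical tensor\<close>

lemma mulc_eq_sum_superset:
  assumes "fsupp x" "fsupp y" "finite P" "{p. m (fst p) (snd p) i \<noteq> 0} \<subseteq> P"
  shows "mulc m x y i = (\<Sum>p\<in>P. x (fst p) * y (snd p) * m (fst p) (snd p) i)"
proof -
  have "mulc m x y i = (\<Sum>p\<in>{k. x k \<noteq> 0} \<times> {l. y l \<noteq> 0}. x (fst p) * y (snd p) * m (fst p) (snd p) i)"
    unfolding mulc_def by (simp add: sum.cartesian_product')
  also have "\<dots> = Sum_any (\<lambda>p. x (fst p) * y (snd p) * m (fst p) (snd p) i)"
    by (rule Sum_any.expand_superset[symmetric]) (use assms(1,2) in \<open>auto simp: fsupp_def\<close>)
  also have "\<dots> = (\<Sum>p\<in>P. x (fst p) * y (snd p) * m (fst p) (snd p) i)"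
    by (rule Sum_any.expand_superset) (use assms(3,4) in auto)
  finally show ?thesis .
qed

lemma pairing_delta: "pairing pr (delta k) y = (\<Sum>j | y j \<noteq> 0. y j * pr k j)"
proof -
  have "{i. delta k i \<noteq> 0} = {k}"
    by (auto simp: delta_def)
  then show ?thesis
    by (simp add: pairing_def delta_def)
qed

lemma pairing2_tensor:
  "pairing2 pr t (tensor y y') =
     (\<Sum>p | t p \<noteq> 0. t p * (pairing pr (delta (fst p)) y * pairing pr (delta (snd p)) y'))"
  unfolding pairing2_def pairing_delta support_tensor sum_product
  by (rule sum.cong[OF refl]) (simp add: sum.cartesian_product' sum_distrib_left tensor_def ac_simps)

lemma pairing_nonzeroE:
  assumes "pairing pr x y \<noteq> 0"
  obtains i j where "x i \<noteq> 0" "y j \<noteq> 0" "pr i j \<noteq> 0"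
  using assms unfolding pairing_def by (auto elim!: sum.not_neutral_contains_not_neutral)

locale dual_pair_factorization =
  coideal_factorization deg m u d e A1 A2 + B: graded_bialg degB mB uB dB eB
  for deg :: "'i \<Rightarrow> nat" and m u d e A1 A2
    and degB :: "'j \<Rightarrow> nat" and mB uB dB eB +
  fixes pr :: "'i \<Rightarrow> 'j \<Rightarrow> complex"
    and dk :: "'k \<Rightarrow> nat" and a :: "'k \<Rightarrow> 'i \<Rightarrow> complex" and b :: "'k \<Rightarrow> 'j \<Rightarrow> complex"
  assumes graded_pairing: "graded_nondeg_pairing deg degB pr"
    and pairing_mulc: "\<forall>x y y'. fsupp x \<longrightarrow> fsupp y \<longrightarrow> fsupp y' \<longrightarrow>
                         pairing pr x (mulc mB y y') = pairing2 pr (comulc d x) (tensor y y')"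
    and dual: "dual_bases deg degB pr dk a b"
begin

abbreviation "dual_coeff k \<alpha> \<equiv> pairing pr (delta k) (b \<alpha>)"

lemma finite_dual_level: "finite {\<alpha>. dk \<alpha> = n}"
  using dual by (simp add: dual_bases_def)

lemma finite_dual_deg_le: "finite {\<alpha>. dk \<alpha> \<le> n}"
proof -
  have "{\<alpha>. dk \<alpha> \<le> n} = (\<Union>k\<le>n. {\<alpha>. dk \<alpha> = k})"
    by auto
  then show ?thesis
    by (simp add: finite_dual_level)
qed

lemma a_fsupp: "fsupp (a \<alpha>)"
  using dual by (simp add: dual_bases_def)

lemma b_fsupp: "fsupp (b \<alpha>)"
  using dual by (simp add: dual_bases_def)

lemma a_deg: "a \<alpha> i \<noteq> 0 \<Longrightarrow> deg i = dk \<alpha>"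
  using dual by (simp add: dual_bases_def homog_def)

lemma b_deg: "b \<alpha> j \<noteq> 0 \<Longrightarrow> degB j = dk \<alpha>"
  using dual by (simp add: dual_bases_def homog_def)

lemma pr_deg: "pr i j \<noteq> 0 \<Longrightarrow> deg i = degB j"
  using graded_pairing by (simp add: graded_nondeg_pairing_def)

lemma b_dual_expansion:
  "fsupp y \<Longrightarrow> (\<lambda>j. \<Sum>\<alpha> | pairing pr (a \<alpha>) y \<noteq> 0. pairing pr (a \<alpha>) y * b \<alpha> j) = y"
  using dual by (simp add: dual_bases_def)

lemma a_dual_expansion:
  "fsupp x \<Longrightarrow> (\<lambda>i. \<Sum>\<alpha> | pairing pr x (b \<alpha>) \<noteq> 0. a \<alpha> i * pairing pr x (b \<alpha>)) = x"
  using dual by (simp add: dual_bases_def)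

lemma canon_eq_sum:
  assumes "finite D" "{\<gamma>. dk \<gamma> = degB j} \<subseteq> D"
  shows "canon a b (i, j) = (\<Sum>\<gamma>\<in>D. a \<gamma> i * b \<gamma> j)"
proof -
  have "canon a b (i, j) = Sum_any (\<lambda>\<gamma>. a \<gamma> i * b \<gamma> j)"
    by (simp add: canon_def Sum_any.expand_set)
  also have "\<dots> = (\<Sum>\<gamma>\<in>D. a \<gamma> i * b \<gamma> j)"
    by (rule Sum_any.expand_superset[OF assms(1)]) (use assms(2) b_deg in force)
  finally show ?thesis .
qed

lemma map_left_canon:
  assumes g_lincomb: "\<And>(F :: 'i set) c x. finite F \<Longrightarrow> (\<And>f. f \<in> F \<Longrightarrow> fsupp (x f)) \<Longrightarrow>
                        g (lincomb F c x) = lincomb F c (\<lambda>f. g (x f))"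
    and D: "finite D" "{\<alpha>. dk \<alpha> = degB j} \<subseteq> D"
  shows "map_left g (canon a b) (i, j) = (\<Sum>\<alpha>\<in>D. g (a \<alpha>) i * b \<alpha> j)"
proof -
  let ?K = "{k. deg k = degB j}"
  have K: "finite ?K"
    by (rule finite_level)
  have canon_eq: "\<And>k. canon a b (k, j) = (\<Sum>\<alpha>\<in>D. a \<alpha> k * b \<alpha> j)"
    by (rule canon_eq_sum[OF D])
  have "{k. canon a b (k, j) \<noteq> 0} \<subseteq> ?K"
    unfolding canon_eq by (force elim: sum.not_neutral_contains_not_neutral dest: a_deg b_deg)
  then have "map_left g (canon a b) (i, j) = (\<Sum>k\<in>?K. g (delta k) i * canon a b (k, j))"
    unfolding map_left_def prod.case by (intro sum.mono_neutral_left K) auto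
  also have "\<dots> = (\<Sum>\<alpha>\<in>D. (\<Sum>k\<in>?K. a \<alpha> k * g (delta k) i) * b \<alpha> j)"
    by (simp add: canon_eq sum_distrib_left sum_distrib_right ac_simps sum.swap[of _ ?K])
  also have "\<dots> = (\<Sum>\<alpha>\<in>D. g (a \<alpha>) i * b \<alpha> j)"
  proof (rule sum.cong[OF refl])
    fix \<alpha>
    show "(\<Sum>k\<in>?K. a \<alpha> k * g (delta k) i) * b \<alpha> j = g (a \<alpha>) i * b \<alpha> j"
    proof (cases "b \<alpha> j = 0")
      case False
      then have "{k. a \<alpha> k \<noteq> 0} \<subseteq> ?K"
        using a_deg b_deg by force
      then have "g (a \<alpha>) = g (lincomb ?K (a \<alpha>) delta)"
        by (simp add: lincomb_delta[OF K])
      also have "\<dots> = lincomb ?K (a \<alpha>) (\<lambda>k. g (delta k))"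
        by (rule g_lincomb[OF K]) simp
      finally show ?thesis
        by (simp add: lincomb_def)
    qed simp
  qed
  finally show ?thesis .
qed

lemma map_left_Pi1_canon:
  assumes "finite D" "{\<alpha>. dk \<alpha> = degB j} \<subseteq> D"
  shows "map_left \<pi>\<^sub>1 (canon a b) (k, j) = (\<Sum>\<alpha>\<in>D. \<pi>\<^sub>1 (a \<alpha>) k * b \<alpha> j)"
  by (rule map_left_canon[OF _ assms]) (fact Pi1_lincomb)

lemma map_left_Pi2_canon:
  assumes "finite D" "{\<alpha>. dk \<alpha> = degB j} \<subseteq> D"
  shows "map_left \<pi>\<^sub>2 (canon a b) (k, j) = (\<Sum>\<alpha>\<in>D. \<pi>\<^sub>2 (a \<alpha>) k * b \<alpha> j)"
  by (rule map_left_canon[OF _ assms]) (fact Pi2_lincomb)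

lemma cmul_map_left_canon:
  fixes i :: 'i and j :: 'j
  defines "D \<equiv> {\<alpha>. dk \<alpha> \<le> degB j}"
  shows "cmul m mB (map_left \<pi>\<^sub>1 (canon a b)) (map_left \<pi>\<^sub>2 (canon a b)) (i, j) =
    (\<Sum>\<alpha>\<beta>\<in>D \<times> D. mulc m (\<pi>\<^sub>1 (a (fst \<alpha>\<beta>))) (\<pi>\<^sub>2 (a (snd \<alpha>\<beta>))) i *
                  mulc mB (b (fst \<alpha>\<beta>)) (b (snd \<alpha>\<beta>)) j)"
proof -
  let ?P = "{p. m (fst p) (snd p) i \<noteq> 0}" and ?Q = "{q. mB (fst q) (snd q) j \<noteq> 0}"
  have D: "finite D"
    unfolding D_def by (rule finite_dual_deg_le)
  have levels: "{\<alpha>. dk \<alpha> = degB (fst q)} \<subseteq> D" "{\<alpha>. dk \<alpha> = degB (snd q)} \<subseteq> D"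
    if "q \<in> ?Q" for q
    using B.mult_deg[of "fst q" "snd q" j] that by (auto simp: D_def)
  let ?T = "\<lambda>p q \<alpha>\<beta>. \<pi>\<^sub>1 (a (fst \<alpha>\<beta>)) (fst p) * \<pi>\<^sub>2 (a (snd \<alpha>\<beta>)) (snd p) * m (fst p) (snd p) i *
                   (b (fst \<alpha>\<beta>) (fst q) * b (snd \<alpha>\<beta>) (snd q) * mB (fst q) (snd q) j)"
  have "cmul m mB (map_left \<pi>\<^sub>1 (canon a b)) (map_left \<pi>\<^sub>2 (canon a b)) (i, j) =
      (\<Sum>p\<in>?P. \<Sum>q\<in>?Q. map_left \<pi>\<^sub>1 (canon a b) (fst p, fst q) * map_left \<pi>\<^sub>2 (canon a b) (snd p, snd q) *
                      m (fst p) (snd p) i * mB (fst q) (snd q) j)"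
    by (simp add: cmul_def)
  also have "\<dots> = (\<Sum>p\<in>?P. \<Sum>q\<in>?Q. \<Sum>\<alpha>\<beta>\<in>D \<times> D. ?T p q \<alpha>\<beta>)"
  proof (intro sum.cong refl)
    fix p q
    assume q: "q \<in> ?Q"
    have product: "map_left \<pi>\<^sub>1 (canon a b) (fst p, fst q) * map_left \<pi>\<^sub>2 (canon a b) (snd p, snd q) =
        (\<Sum>\<alpha>\<beta>\<in>D \<times> D. \<pi>\<^sub>1 (a (fst \<alpha>\<beta>)) (fst p) * b (fst \<alpha>\<beta>) (fst q) *
                     (\<pi>\<^sub>2 (a (snd \<alpha>\<beta>)) (snd p) * b (snd \<alpha>\<beta>) (snd q)))"
      unfolding map_left_Pi1_canon[OF D levels(1)[OF q]] map_left_Pi2_canon[OF D levels(2)[OF q]]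
      by (simp only: sum_product sum.cartesian_product split_def)
    show "map_left \<pi>\<^sub>1 (canon a b) (fst p, fst q) * map_left \<pi>\<^sub>2 (canon a b) (snd p, snd q) *
            m (fst p) (snd p) i * mB (fst q) (snd q) j = (\<Sum>\<alpha>\<beta>\<in>D \<times> D. ?T p q \<alpha>\<beta>)"
      unfolding product sum_distrib_right by (rule sum.cong[OF refl]) (simp only: mult_ac)
  qed
  also have "\<dots> = (\<Sum>p\<in>?P. \<Sum>\<alpha>\<beta>\<in>D \<times> D. \<Sum>q\<in>?Q. ?T p q \<alpha>\<beta>)"
    by (rule sum.cong[OF refl], rule sum.swap)
  also have "\<dots> = (\<Sum>\<alpha>\<beta>\<in>D \<times> D. \<Sum>p\<in>?P. \<Sum>q\<in>?Q. ?T p q \<alpha>\<beta>)"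
    by (rule sum.swap)
  also have "\<dots> = (\<Sum>\<alpha>\<beta>\<in>D \<times> D. mulc m (\<pi>\<^sub>1 (a (fst \<alpha>\<beta>))) (\<pi>\<^sub>2 (a (snd \<alpha>\<beta>))) i *
                                mulc mB (b (fst \<alpha>\<beta>)) (b (snd \<alpha>\<beta>)) j)"
  proof (rule sum.cong[OF refl])
    fix \<alpha>\<beta>
    have "mulc m (\<pi>\<^sub>1 (a (fst \<alpha>\<beta>))) (\<pi>\<^sub>2 (a (snd \<alpha>\<beta>))) i =
            (\<Sum>p\<in>?P. \<pi>\<^sub>1 (a (fst \<alpha>\<beta>)) (fst p) * \<pi>\<^sub>2 (a (snd \<alpha>\<beta>)) (snd p) * m (fst p) (snd p) i)"
      by (rule mulc_eq_sum_superset) (simp_all add: Pi1_fsupp Pi2_fsupp a_fsupp finite_mult_support)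
    moreover have "mulc mB (b (fst \<alpha>\<beta>)) (b (snd \<alpha>\<beta>)) j =
            (\<Sum>q\<in>?Q. b (fst \<alpha>\<beta>) (fst q) * b (snd \<alpha>\<beta>) (snd q) * mB (fst q) (snd q) j)"
      by (rule mulc_eq_sum_superset) (simp_all add: b_fsupp B.finite_mult_support)
    ultimately show "(\<Sum>p\<in>?P. \<Sum>q\<in>?Q. ?T p q \<alpha>\<beta>) =
        mulc m (\<pi>\<^sub>1 (a (fst \<alpha>\<beta>))) (\<pi>\<^sub>2 (a (snd \<alpha>\<beta>))) i * mulc mB (b (fst \<alpha>\<beta>)) (b (snd \<alpha>\<beta>)) j"
      by (simp only: sum_product)
  qed
  finally show ?thesis .
qed

lemma pairing_mulc_dual_coeff:
  "pairing pr (a \<gamma>) (mulc mB (b \<alpha>) (b \<beta>)) =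
     (\<Sum>p | comulc d (a \<gamma>) p \<noteq> 0. comulc d (a \<gamma>) p * (dual_coeff (fst p) \<alpha> * dual_coeff (snd p) \<beta>))"
  using pairing_mulc a_fsupp b_fsupp by (simp add: pairing2_tensor)

lemma b_expansion:
  assumes y: "fsupp y"
  shows "y j = (\<Sum>\<gamma> | dk \<gamma> = degB j. pairing pr (a \<gamma>) y * b \<gamma> j)"
proof -
  let ?S = "{\<gamma>. pairing pr (a \<gamma>) y \<noteq> 0}"
  have "?S \<subseteq> (\<Union>j'\<in>{j'. y j' \<noteq> 0}. {\<gamma>. dk \<gamma> = degB j'})"
    using a_deg pr_deg by (fastforce elim: pairing_nonzeroE)
  then have S: "finite ?S"
    by (rule finite_subset) (use y finite_dual_level in \<open>simp add: fsupp_def\<close>)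
  have "y j = (\<Sum>\<gamma>\<in>?S. pairing pr (a \<gamma>) y * b \<gamma> j)"
    using fun_cong[OF b_dual_expansion[OF y], of j] by simp
  also have "\<dots> = Sum_any (\<lambda>\<gamma>. pairing pr (a \<gamma>) y * b \<gamma> j)"
    by (rule Sum_any.expand_superset[symmetric, OF S]) auto
  also have "\<dots> = (\<Sum>\<gamma> | dk \<gamma> = degB j. pairing pr (a \<gamma>) y * b \<gamma> j)"
    by (rule Sum_any.expand_superset[OF finite_dual_level]) (use b_deg in force)
  finally show ?thesis .
qed

lemma delta_expansion:
  assumes "deg k \<le> N"
  shows "delta k = lincomb {\<alpha>. dk \<alpha> \<le> N} (dual_coeff k) a"
proof
  fix i
  let ?S = "{\<alpha>. dual_coeff k \<alpha> \<noteq> 0}"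
  have S: "?S \<subseteq> {\<alpha>. dk \<alpha> \<le> N}"
    using assms b_deg pr_deg by (force simp: delta_def split: if_splits elim: pairing_nonzeroE)
  have "delta k i = (\<Sum>\<alpha>\<in>?S. a \<alpha> i * dual_coeff k \<alpha>)"
    using fun_cong[OF a_dual_expansion[OF fsupp_delta], of i] by simp
  also have "\<dots> = (\<Sum>\<alpha> | dk \<alpha> \<le> N. a \<alpha> i * dual_coeff k \<alpha>)"
    by (rule sum.mono_neutral_left[OF finite_dual_deg_le S]) auto
  finally show "delta k i = lincomb {\<alpha>. dk \<alpha> \<le> N} (dual_coeff k) a i"
    by (simp add: lincomb_def mult.commute)
qed

lemma mulc_Pi_delta_dual:
  assumes "deg k \<le> N" "deg l \<le> N"
  defines "D \<equiv> {\<alpha>. dk \<alpha> \<le> N}"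
  shows "mulc m (\<pi>\<^sub>1 (delta k)) (\<pi>\<^sub>2 (delta l)) =
           lincomb (D \<times> D) (\<lambda>\<alpha>\<beta>. dual_coeff k (fst \<alpha>\<beta>) * dual_coeff l (snd \<alpha>\<beta>))
             (\<lambda>\<alpha>\<beta>. mulc m (\<pi>\<^sub>1 (a (fst \<alpha>\<beta>))) (\<pi>\<^sub>2 (a (snd \<alpha>\<beta>))))"
proof -
  have D: "finite D"
    unfolding D_def by (rule finite_dual_deg_le)
  have "\<pi>\<^sub>1 (delta k) = lincomb D (dual_coeff k) (\<lambda>\<alpha>. \<pi>\<^sub>1 (a \<alpha>))"
    by (subst delta_expansion[OF assms(1)]) (simp add: Pi1_lincomb D_def finite_dual_deg_le a_fsupp)
  moreover have "\<pi>\<^sub>2 (delta l) = lincomb D (dual_coeff l) (\<lambda>\<alpha>. \<pi>\<^sub>2 (a \<alpha>))"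
    by (subst delta_expansion[OF assms(2)]) (simp add: Pi2_lincomb D_def finite_dual_deg_le a_fsupp)
  ultimately show ?thesis
    by (simp add: mulc_lincomb_lincomb D a_fsupp Pi1_fsupp Pi2_fsupp)
qed

lemma mult_proj_comulc_dual:
  assumes "dk \<gamma> \<le> N"
  defines "D \<equiv> {\<alpha>. dk \<alpha> \<le> N}"
  shows "lincomb (D \<times> D) (\<lambda>\<alpha>\<beta>. pairing pr (a \<gamma>) (mulc mB (b (fst \<alpha>\<beta>)) (b (snd \<alpha>\<beta>))))
           (\<lambda>\<alpha>\<beta>. mulc m (\<pi>\<^sub>1 (a (fst \<alpha>\<beta>))) (\<pi>\<^sub>2 (a (snd \<alpha>\<beta>)))) = a \<gamma>"
proof -
  let ?t = "comulc d (a \<gamma>)"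
  let ?S = "{p. ?t p \<noteq> 0}"
  have t: "fsupp ?t"
    by (simp add: comulc_fsupp a_fsupp)
  have degs: "deg (fst p) \<le> N" "deg (snd p) \<le> N" if p: "p \<in> ?S" for p
  proof -
    obtain i where "a \<gamma> i \<noteq> 0" "d i (fst p) (snd p) \<noteq> 0"
      using p by (auto simp: comulc_def split_beta elim!: sum.not_neutral_contains_not_neutral)
    then show "deg (fst p) \<le> N" "deg (snd p) \<le> N"
      using a_deg comult_deg assms(1) by force+
  qed
  have "lincomb (D \<times> D) (\<lambda>\<alpha>\<beta>. pairing pr (a \<gamma>) (mulc mB (b (fst \<alpha>\<beta>)) (b (snd \<alpha>\<beta>))))
           (\<lambda>\<alpha>\<beta>. mulc m (\<pi>\<^sub>1 (a (fst \<alpha>\<beta>))) (\<pi>\<^sub>2 (a (snd \<alpha>\<beta>)))) =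
        lincomb ?S ?t (\<lambda>p. lincomb (D \<times> D) (\<lambda>\<alpha>\<beta>. dual_coeff (fst p) (fst \<alpha>\<beta>) * dual_coeff (snd p) (snd \<alpha>\<beta>))
           (\<lambda>\<alpha>\<beta>. mulc m (\<pi>\<^sub>1 (a (fst \<alpha>\<beta>))) (\<pi>\<^sub>2 (a (snd \<alpha>\<beta>)))))"
    unfolding pairing_mulc_dual_coeff by (rule lincomb_sum_coeffs)
  also have "\<dots> = lincomb ?S ?t (\<lambda>p. mulc m (\<pi>\<^sub>1 (delta (fst p))) (\<pi>\<^sub>2 (delta (snd p))))"
  proof (rule lincomb_cong)
    fix p
    assume p: "p \<in> ?S"
    show "lincomb (D \<times> D) (\<lambda>\<alpha>\<beta>. dual_coeff (fst p) (fst \<alpha>\<beta>) * dual_coeff (snd p) (snd \<alpha>\<beta>))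
           (\<lambda>\<alpha>\<beta>. mulc m (\<pi>\<^sub>1 (a (fst \<alpha>\<beta>))) (\<pi>\<^sub>2 (a (snd \<alpha>\<beta>)))) =
          mulc m (\<pi>\<^sub>1 (delta (fst p))) (\<pi>\<^sub>2 (delta (snd p)))"
      unfolding D_def by (rule mulc_Pi_delta_dual[OF degs[OF p], symmetric])
  qed simp_all
  also have "\<dots> = mult_proj ?t"
    by (rule mult_proj_eq_lincomb[OF t, symmetric])
  also have "\<dots> = a \<gamma>"
    by (rule mult_proj_comulc[OF a_fsupp])
  finally show ?thesis .
qed

lemma cmul_map_left_canon_dual:
  fixes i :: 'i and j :: 'j
  defines "D \<equiv> {\<alpha>. dk \<alpha> \<le> degB j}"
  shows "cmul m mB (map_left \<pi>\<^sub>1 (canon a b)) (map_left \<pi>\<^sub>2 (canon a b)) (i, j) =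
    (\<Sum>\<gamma> | dk \<gamma> = degB j.
       lincomb (D \<times> D) (\<lambda>\<alpha>\<beta>. pairing pr (a \<gamma>) (mulc mB (b (fst \<alpha>\<beta>)) (b (snd \<alpha>\<beta>))))
         (\<lambda>\<alpha>\<beta>. mulc m (\<pi>\<^sub>1 (a (fst \<alpha>\<beta>))) (\<pi>\<^sub>2 (a (snd \<alpha>\<beta>)))) i * b \<gamma> j)"
proof -
  have b_products: "mulc mB (b \<alpha>) (b \<beta>) j =
      (\<Sum>\<gamma> | dk \<gamma> = degB j. pairing pr (a \<gamma>) (mulc mB (b \<alpha>) (b \<beta>)) * b \<gamma> j)" for \<alpha> \<beta>
    by (rule b_expansion) (rule B.mulc_fsupp[OF b_fsupp b_fsupp])
  show ?thesis
    unfolding cmul_map_left_canon D_def b_products sum_distrib_left lincomb_def sum_distrib_right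
    by (subst sum.swap) (simp only: mult_ac)
qed

end

theorem mainTheorem10:
  fixes degA :: "'i \<Rightarrow> nat" and mA :: "'i \<Rightarrow> 'i \<Rightarrow> 'i \<Rightarrow> complex"
    and uA :: "'i \<Rightarrow> complex" and dA :: "'i \<Rightarrow> 'i \<Rightarrow> 'i \<Rightarrow> complex" and eA :: "'i \<Rightarrow> complex"
    and degB :: "'j \<Rightarrow> nat" and mB :: "'j \<Rightarrow> 'j \<Rightarrow> 'j \<Rightarrow> complex"
    and uB :: "'j \<Rightarrow> complex" and dB :: "'j \<Rightarrow> 'j \<Rightarrow> 'j \<Rightarrow> complex" and eB :: "'j \<Rightarrow> complex"
    and pr :: "'i \<Rightarrow> 'j \<Rightarrow> complex"
    and A1 A2 :: "('i \<Rightarrow> complex) set"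
    and dk :: "'k \<Rightarrow> nat" and a :: "'k \<Rightarrow> 'i \<Rightarrow> complex" and b :: "'k \<Rightarrow> 'j \<Rightarrow> complex"
  assumes bialgA: "graded_bialgebra degA mA uA dA eA"
    and bialgB: "graded_bialgebra degB mB uB dB eB"
    and sub1: "subalgebra mA uA A1"
    and sub2: "subalgebra mA uA A2"
    and fact: "bij_betw (mult_map mA) (tspan A1 A2) {x. fsupp x}"
    and cop1: "\<forall>x\<in>A1. comulc dA x \<in> tspan {y. fsupp y} A1"
    and cop2: "\<forall>x\<in>A2. comulc dA x \<in> tspan A2 {y. fsupp y}"
    and pairing: "graded_nondeg_pairing degA degB pr"
    and pair_mult: "\<forall>x y1 y2. fsupp x \<longrightarrow> fsupp y1 \<longrightarrow> fsupp y2 \<longrightarrow>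
                     pairing pr x (mulc mB y1 y2) = pairing2 pr (comulc dA x) (tensor y1 y2)"
    and pair_comult: "\<forall>x1 x2 y. fsupp x1 \<longrightarrow> fsupp x2 \<longrightarrow> fsupp y \<longrightarrow>
                     pairing pr (mulc mA x1 x2) y = pairing2 pr (tensor x2 x1) (comulc dB y)"
    and dual: "dual_bases degA degB pr dk a b"
  shows "canon a b =
         cmul mA mB (map_left (Pi1 mA eA A1 A2) (canon a b))
                    (map_left (Pi2 mA eA A1 A2) (canon a b))"
proof -
  interpret dual_pair_factorization degA mA uA dA eA A1 A2 degB mB uB dB eB pr dk a b
    by unfold_locales (use assms in \<open>simp_all add: subalgebra_def\<close>)
  show ?thesis
  proof (rule ext, clarify)
    fix i j
    let ?D = "{\<alpha>. dk \<alpha> \<le> degB j}" and ?L = "{\<gamma>. dk \<gamma> = degB j}"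
    have "cmul mA mB (map_left \<pi>\<^sub>1 (canon a b)) (map_left \<pi>\<^sub>2 (canon a b)) (i, j) =
        (\<Sum>\<gamma>\<in>?L. lincomb (?D \<times> ?D) (\<lambda>\<alpha>\<beta>. pairing pr (a \<gamma>) (mulc mB (b (fst \<alpha>\<beta>)) (b (snd \<alpha>\<beta>))))
                   (\<lambda>\<alpha>\<beta>. mulc mA (\<pi>\<^sub>1 (a (fst \<alpha>\<beta>))) (\<pi>\<^sub>2 (a (snd \<alpha>\<beta>)))) i * b \<gamma> j)"
      by (rule cmul_map_left_canon_dual)
    also have "\<dots> = (\<Sum>\<gamma>\<in>?L. a \<gamma> i * b \<gamma> j)"
      by (intro sum.cong refl) (simp add: mult_proj_comulc_dual)
    also have "\<dots> = canon a b (i, j)"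
      by (rule canon_eq_sum[symmetric]) (simp_all add: finite_dual_level)
    finally show "canon a b (i, j) = cmul mA mB (map_left \<pi>\<^sub>1 (canon a b)) (map_left \<pi>\<^sub>2 (canon a b)) (i, j)" ..
  qed
qed

end
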